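(* Let $J=(j_1,\ldots,j_r)\in\mathbb{Z}^r$, $\delta=(d_1,\ldots,d_r)\in C_J$ and $i\in\{1,\ldots,n-1\}$. Then the following algorithm terminates and outputs $r_i$: (1) Let $D\subset\{1,\ldots,r\}$ be the set of $t$ with $\inf(d_t)=j_t$. (2) For every $t\in D$, compute $p_t\in B_n^+$ with $d_t=\Delta^{j_t}p_t$. (3) Let $s=\sigma_i$. (4) If $\tau^{j_t}(s)\prec p_ts$ for every $t\in D$, return $s$ and stop. (5) Otherwise take $m\in D$ with $\tau^{j_m}(s)\not\prec p_ms$. (6) Compute $s'\in B_n^+$ such that $(p_ms)s'=\tau^{j_m}(s)\vee p_ms$. (7) Replace $s$ by $ss'$ and go to step (4).
   Context: $B_n$ is the braid group with Artin generators $\sigma_1,\ldots,\sigma_{n-1}$, $B_n^+$ the positive braid monoid, $\Delta$ the Garside element (half twist), and $\tau:B_n\to B_n$ the automorphism $\tau(x)=\Delta^{-1}x\Delta$. For $a,b\in B_n^+$, $a\prec b$ means $ac=b$ for some $c\in B_n^+$; $a\vee b$ denotes the least common multiple with respect to $\prec$. Simple elements are the $s\in B_n^+$ with $s\prec\Delta$. For $a\in B_n$, $\inf(a)$ is the largest $k\in\mathbb{Z}$ with $a=\Delta^kp$, $p\in B_n^+$. For $J\in\mathbb{Z}^r$, $C_J$ is the set of $(d_1,\ldots,d_r)\in(B_n)^r$ with $\inf(d_t)\ge j_t$ for all $t$. For $\delta\in C_J$ and $i\in\{1,\ldots,n-1\}$, it is known that the set of simple elements $s$ with $\sigma_i\prec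 s$ and $s^{-1}\delta s\in C_J$ (componentwise conjugation) has a unique $\prec$-minimal element; this element is denoted $r_i$. *)

theory Defs
  imports Main
begin

text \<open>Braid words: a letter (j, True) is the Artin generator sigma_j, (j, False) its inverse.
  Elements of B_n are braid words modulo the congruence braid_eq n generated by free
  cancellation and the Artin relations (standard presentation of B_n).\<close>

type_synonym bword = "(nat \<times> bool) list"

definition valid_word :: "nat \<Rightarrow> bword \<Rightarrow> bool" where
  "valid_word n w = (\<forall>x\<in>set w. 1 \<le> fst x \<and> fst x < n)"

inductive braid_eq :: "nat \<Rightarrow> bword \<Rightarrow> bword \<Rightarrow> bool" for n :: nat where
  be_refl: "braid_eq n w w"
| be_sym: "braid_eq n x y \<Longrightarrow> braid_eq n y x"
| be_trans: "braid_eq n x y \<Longrightarrow> braid_eq n y z \<Longrightarrow> braid_eq n x z"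
| be_ctxt: "braid_eq n x y \<Longrightarrow> braid_eq n (u @ x @ v) (u @ y @ v)"
| be_cancel: "1 \<le> j \<Longrightarrow> j < n \<Longrightarrow> braid_eq n [(j, b), (j, \<not> b)] []"
| be_comm: "1 \<le> j \<Longrightarrow> j + 2 \<le> k \<Longrightarrow> k < n \<Longrightarrow>
             braid_eq n [(j, True), (k, True)] [(k, True), (j, True)]"
| be_braid: "1 \<le> j \<Longrightarrow> j + 1 < n \<Longrightarrow>
             braid_eq n [(j, True), (j + 1, True), (j, True)] [(j + 1, True), (j, True), (j + 1, True)]"

definition inv_word :: "bword \<Rightarrow> bword" where
  "inv_word w = rev (map (\<lambda>(j, b). (j, \<not> b)) w)"

definition positive :: "nat \<Rightarrow> bword \<Rightarrow> bool" where
  "positive n w = (\<exists>p. valid_word n p \<and> (\<forall>x\<in>set p. snd x) \<and> braid_eq n w p)"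

definition prec :: "nat \<Rightarrow> bword \<Rightarrow> bword \<Rightarrow> bool" where
  "prec n a b = (\<exists>c. positive n c \<and> braid_eq n (a @ c) b)"

definition is_lcm :: "nat \<Rightarrow> bword \<Rightarrow> bword \<Rightarrow> bword \<Rightarrow> bool" where
  "is_lcm n a b l = (positive n l \<and> prec n a l \<and> prec n b l \<and>
     (\<forall>z. positive n z \<longrightarrow> prec n a z \<longrightarrow> prec n b z \<longrightarrow> prec n l z))"

definition delta_word :: "nat \<Rightarrow> bword" where
  "delta_word n = concat (map (\<lambda>k. map (\<lambda>j. (j, True)) (rev [1..<Suc k])) [1..<n])"

definition delta_pow :: "nat \<Rightarrow> int \<Rightarrow> bword" where
  "delta_pow n k = (if 0 \<le> k then concat (replicate (nat k) (delta_word n))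
                    else concat (replicate (nat (- k)) (inv_word (delta_word n))))"

text \<open>tau^k(x) = Delta^{-k} x Delta^k, since tau(x) = Delta^{-1} x Delta.\<close>
definition tau_pow :: "nat \<Rightarrow> int \<Rightarrow> bword \<Rightarrow> bword" where
  "tau_pow n k x = delta_pow n (- k) @ x @ delta_pow n k"

definition simple :: "nat \<Rightarrow> bword \<Rightarrow> bool" where
  "simple n s = (positive n s \<and> prec n s (delta_word n))"

definition binf :: "nat \<Rightarrow> bword \<Rightarrow> int" where
  "binf n a = (GREATEST k::int. \<exists>p. positive n p \<and> braid_eq n a (delta_pow n k @ p))"

text \<open>C_J (indices t are 0-based: t < length J).\<close>
definition in_C :: "nat \<Rightarrow> int list \<Rightarrow> bword list \<Rightarrow> bool" where
  "in_C n J \<delta> = (length \<delta> = length J \<and>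
     (\<forall>t<length J. valid_word n (\<delta> ! t) \<and> J ! t \<le> binf n (\<delta> ! t)))"

definition conj_tuple :: "bword list \<Rightarrow> bword \<Rightarrow> bword list" where
  "conj_tuple \<delta> s = map (\<lambda>d. inv_word s @ d @ s) \<delta>"

definition r_set :: "nat \<Rightarrow> int list \<Rightarrow> bword list \<Rightarrow> nat \<Rightarrow> bword set" where
  "r_set n J \<delta> i = {s. valid_word n s \<and> simple n s \<and> prec n [(i, True)] s \<and>
                        in_C n J (conj_tuple \<delta> s)}"

definition minimal_in :: "nat \<Rightarrow> bword set \<Rightarrow> bword \<Rightarrow> bool" where
  "minimal_in n S s = (s \<in> S \<and> (\<forall>s'\<in>S. prec n s' s \<longrightarrow> braid_eq n s' s))"

definition is_r :: "nat \<Rightarrow> int list \<Rightarrow> bword list \<Rightarrow> nat \<Rightarrow> bword \<Rightarrow> bool" where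
  "is_r n J \<delta> i s = (minimal_in n (r_set n J \<delta> i) s \<and>
      (\<forall>s'. minimal_in n (r_set n J \<delta> i) s' \<longrightarrow> braid_eq n s' s))"

text \<open>The algorithm. D (step 1); p t are the words computed in step 2.\<close>
definition alg_D :: "nat \<Rightarrow> int list \<Rightarrow> bword list \<Rightarrow> nat set" where
  "alg_D n J \<delta> = {t. t < length J \<and> binf n (\<delta> ! t) = J ! t}"

definition alg_stop :: "nat \<Rightarrow> int list \<Rightarrow> bword list \<Rightarrow> (nat \<Rightarrow> bword) \<Rightarrow> bword \<Rightarrow> bool" where
  "alg_stop n J \<delta> p s = (\<forall>t\<in>alg_D n J \<delta>. prec n (tau_pow n (J ! t) s) (p t @ s))"

text \<open>One pass through steps 5-7 (nondeterministic in the choice of m and of the word s').\<close>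
definition alg_step :: "nat \<Rightarrow> int list \<Rightarrow> bword list \<Rightarrow> (nat \<Rightarrow> bword) \<Rightarrow> bword \<Rightarrow> bword \<Rightarrow> bool" where
  "alg_step n J \<delta> p s s2 = (\<exists>m\<in>alg_D n J \<delta>. \<not> prec n (tau_pow n (J ! m) s) (p m @ s) \<and>
     (\<exists>s'. valid_word n s' \<and> positive n s' \<and>
           is_lcm n (tau_pow n (J ! m) s) (p m @ s) (p m @ s @ s') \<and> s2 = s @ s'))"

end

theory Submission
  imports Defs
begin

(* The candidates for r_i are the simple elements x with sigma_i \<prec> x and x^-1 \<delta> x \<in> C_J.
   For t \<in> D the condition on the t-th component says exactly that \<tau>^j_t(x) \<prec> p_t x, and for
   t \<notin> D it holds for every simple x. The algorithm keeps s a prefix of every candidate x: both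
   \<tau>^j_m(s) and p_m s are prefixes of p_m x, hence so is their lcm p_m s s', that is, s s' \<prec> x.
   As \<Delta> is a candidate, the exponent sum of s, which grows at each step, stays below that of \<Delta>;
   so the algorithm stops, and when it stops s is itself a candidate, hence the least one.

   The Garside theory behind this is derived from the presentation. A reversing argument shows
   that if i X = j Y for positive words and letters i, j, then X and Y factor through the lcm of
   the letters i and j (Garside's lemma). This gives cancellativity of B_n^+, its embedding into
   B_n (every braid is \<Delta>^-k times a positive word), and, by induction below a common multiple,
   least common multiples. *)

section \<open>Positive words and Garside's lemma\<close>

definition distant :: "nat \<Rightarrow> nat \<Rightarrow> bool" where "distant a b \<longleftrightarrow> a + 2 \<le> b \<or> b + 2 \<le> a"
definition adjacent :: "nat \<Rightarrow> nat \<Rightarrow> bool" where "adjacent a b \<longleftrightarrow> b = a + 1 \<or> a = b + 1"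

lemma distant_sym: "distant a b \<Longrightarrow> distant b a" by (auto simp: distant_def)
lemma adjacent_sym: "adjacent a b \<Longrightarrow> adjacent b a" by (auto simp: adjacent_def)
lemma adjacent_or_distant: "a \<noteq> b \<Longrightarrow> adjacent a b \<or> distant a b"
  by (auto simp: adjacent_def distant_def)
lemma adjacent_not_distant: "adjacent a b \<Longrightarrow> \<not> distant a b" by (auto simp: adjacent_def distant_def)
lemma adjacent_neq: "adjacent a b \<Longrightarrow> a \<noteq> b" by (auto simp: adjacent_def)
lemma distant_neq: "distant a b \<Longrightarrow> a \<noteq> b" by (auto simp: distant_def)

inductive braid_rel :: "nat list \<Rightarrow> nat list \<Rightarrow> bool" where
  comm: "distant a b \<Longrightarrow> braid_rel [a,b] [b,a]"
| braid: "adjacent a b \<Longrightarrow> braid_rel [a,b,a] [b,a,b]"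

lemma braid_rel_sym: "braid_rel l r \<Longrightarrow> braid_rel r l"
  by (induction rule: braid_rel.induct) (auto intro: braid_rel.intros distant_sym adjacent_sym)

definition pos_step :: "nat list \<Rightarrow> nat list \<Rightarrow> bool" where
  "pos_step u v \<longleftrightarrow> (\<exists>x y l r. braid_rel l r \<and> u = x@l@y \<and> v = x@r@y)"

abbreviation pos_eq :: "nat list \<Rightarrow> nat list \<Rightarrow> bool" where "pos_eq \<equiv> pos_step\<^sup>*\<^sup>*"

lemma pos_step_sym: "pos_step u v \<Longrightarrow> pos_step v u"
  unfolding pos_step_def by (blast intro: braid_rel_sym)

lemma pos_eq_sym: "pos_eq u v \<Longrightarrow> pos_eq v u"
  by (induction rule: rtranclp_induct) (auto intro: pos_step_sym converse_rtranclp_into_rtranclp)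

lemma braid_rel_length: "braid_rel l r \<Longrightarrow> length l = length r"
  by (induction rule: braid_rel.induct) auto
lemma braid_rel_set: "braid_rel l r \<Longrightarrow> set l = set r"
  by (induction rule: braid_rel.induct) auto

lemma pos_step_length: "pos_step u v \<Longrightarrow> length u = length v"
  unfolding pos_step_def using braid_rel_length by fastforce
lemma pos_eq_length: "pos_eq u v \<Longrightarrow> length u = length v"
  by (induction rule: rtranclp_induct) (auto dest: pos_step_length)
lemma pos_step_set: "pos_step u v \<Longrightarrow> set u = set v"
  unfolding pos_step_def using braid_rel_set by fastforce
lemma pos_eq_set: "pos_eq u v \<Longrightarrow> set u = set v"
  by (induction rule: rtranclp_induct) (auto dest: pos_step_set)

lemma pos_step_context: "pos_step u v \<Longrightarrow> pos_step (x@u@y) (x@v@y)"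
  unfolding pos_step_def by (metis append.assoc)
lemma pos_eq_context: "pos_eq u v \<Longrightarrow> pos_eq (x@u@y) (x@v@y)"
  by (induction rule: rtranclp_induct) (auto intro: pos_step_context rtranclp.rtrancl_into_rtrancl)
lemma pos_eq_append_left: "pos_eq u v \<Longrightarrow> pos_eq (x@u) (x@v)"
  using pos_eq_context[of u v x "[]"] by simp
lemma pos_eq_append_right: "pos_eq u v \<Longrightarrow> pos_eq (u@y) (v@y)"
  using pos_eq_context[of u v "[]" y] by simp
lemma pos_eq_Cons: "pos_eq u v \<Longrightarrow> pos_eq (a#u) (a#v)"
  using pos_eq_append_left[of u v "[a]"] by simp

lemma pos_eq_comm_at: "distant a b \<Longrightarrow> pos_eq (x @ a # b # y) (x @ b # a # y)"
proof -
  assume "distant a b"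
  hence "pos_step (x @ [a,b] @ y) (x @ [b,a] @ y)" unfolding pos_step_def by (blast intro: comm)
  thus ?thesis by simp
qed
lemma pos_eq_braid_at: "adjacent a b \<Longrightarrow> pos_eq (x @ a # b # a # y) (x @ b # a # b # y)"
proof -
  assume "adjacent a b"
  hence "pos_step (x @ [a,b,a] @ y) (x @ [b,a,b] @ y)" unfolding pos_step_def
    by (blast intro: braid)
  thus ?thesis by simp
qed
lemma pos_eq_comm: "distant a b \<Longrightarrow> pos_eq (a # b # y) (b # a # y)"
  using pos_eq_comm_at[of a b "[]"] by simp
lemma pos_eq_braid: "adjacent a b \<Longrightarrow> pos_eq (a # b # a # y) (b # a # b # y)"
  using pos_eq_braid_at[of a b "[]"] by simp

text \<open>\<^term>\<open>i # lcm_tail i j\<close> is the least common multiple of the letters i and j.\<close>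

definition lcm_tail :: "nat \<Rightarrow> nat \<Rightarrow> nat list" where
  "lcm_tail a b = (if a = b then [] else if adjacent a b then [b,a] else [b])"

lemma lcm_tail_same[simp]: "lcm_tail a a = []" by (simp add: lcm_tail_def)
lemma lcm_tail_adjacent: "adjacent a b \<Longrightarrow> lcm_tail a b = [b,a]"
  by (simp add: lcm_tail_def adjacent_neq)
lemma lcm_tail_distant: "distant a b \<Longrightarrow> lcm_tail a b = [b]"
  by (auto simp: lcm_tail_def adjacent_not_distant distant_neq)

lemma pos_step_Cons_cases:
  assumes "pos_step (k#V) (j#Y)"
  shows "(k = j \<and> pos_step V Y) \<or> (distant k j \<and> (\<exists>b. V = j#b \<and> Y = k#b))
        \<or> (adjacent k j \<and> (\<exists>b. V = j#k#b \<and> Y = k#j#b))"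
proof -
  obtain x y l r where pr: "braid_rel l r" and u: "k#V = x@l@y" and v: "j#Y = x@r@y"
    using assms unfolding pos_step_def by blast
  show ?thesis
  proof (cases x)
    case (Cons c x')
    then have "k = j" "V = x'@l@y" "Y = x'@r@y" using u v by auto
    then show ?thesis using pr unfolding pos_step_def by blast
  next
    case Nil
    from pr show ?thesis
    proof cases
      case (comm a b)
      then show ?thesis using u v Nil by auto
    next
      case (braid a b)
      then show ?thesis using u v Nil by auto
    qed
  qed
qed

lemma pos_eq_trans_sym: "pos_eq u v \<Longrightarrow> pos_eq w v \<Longrightarrow> pos_eq u w"
  by (meson pos_eq_sym rtranclp_trans)

text \<open>The induction step of Garside's lemma: from \<open>i X = k V\<close>, with X and V factoring through
  the lcm of i and k, and one relation rewriting \<open>k V\<close> into \<open>j Y\<close> at the front.\<close>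

context
  fixes N :: nat
  assumes shorter: "\<And>X a b Y. length X < N \<Longrightarrow> pos_eq (a # X) (b # Y) \<Longrightarrow>
      \<exists>Z. pos_eq X (lcm_tail a b @ Z) \<and> pos_eq Y (lcm_tail b a @ Z)"
begin

lemma shorter_Cons_cancel:
  assumes "length X < N" "pos_eq (a # X) (a # Y)"
  shows "pos_eq X Y"
proof -
  obtain Z where "pos_eq X Z" "pos_eq Y Z" using shorter[OF assms] by auto
  then show ?thesis by (rule pos_eq_trans_sym)
qed

lemma through_lcm_comm_dist:
  assumes kj: "distant k j" and ik: "distant i k"
    and X: "pos_eq X (k # Z1)" and b: "pos_eq (j # b) (i # Z1)" and len: "Suc (length b) = N"
  shows "\<exists>Z. pos_eq X (lcm_tail i j @ Z) \<and> pos_eq (k # b) (lcm_tail j i @ Z)"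
proof -
  obtain Z2 where Z2: "pos_eq b (lcm_tail j i @ Z2)" "pos_eq Z1 (lcm_tail i j @ Z2)"
    using shorter[OF _ b] len by auto
  consider "i = j" | "distant i j" | "adjacent i j" using adjacent_or_distant by blast
  then show ?thesis
  proof cases
    case 1
    have "pos_eq X (k # Z2)" using X Z2 1 by simp (meson pos_eq_Cons rtranclp_trans)
    moreover have "pos_eq (k # b) (k # Z2)" using Z2 1 by (simp add: pos_eq_Cons)
    ultimately show ?thesis using 1 by auto
  next
    case 2
    note X
    also have "pos_eq (k # Z1) (k # j # Z2)" using Z2 2 by (simp add: lcm_tail_distant pos_eq_Cons)
    also have "pos_eq \<dots> (j # k # Z2)" using kj by (simp add: pos_eq_comm)
    finally have X': "pos_eq X (j # k # Z2)" .
    have "pos_eq (k # b) (k # i # Z2)" using Z2 2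
      by (simp add: lcm_tail_distant distant_sym pos_eq_Cons)
    also have "pos_eq \<dots> (i # k # Z2)" using ik by (simp add: pos_eq_comm distant_sym)
    finally show ?thesis using X' 2 by (auto simp: lcm_tail_distant distant_sym)
  next
    case 3
    note X
    also have "pos_eq (k # Z1) (k # j # i # Z2)" using Z2 3
      by (simp add: lcm_tail_adjacent pos_eq_Cons)
    also have "pos_eq \<dots> (j # k # i # Z2)" using kj by (simp add: pos_eq_comm)
    also have "pos_eq \<dots> (j # i # k # Z2)" using ik pos_eq_comm_at[of k i "[j]"]
      by (simp add: distant_sym)
    finally have X': "pos_eq X (j # i # k # Z2)" .
    have "pos_eq (k # b) (k # i # j # Z2)"
      using Z2 3 by (simp add: lcm_tail_adjacent adjacent_sym pos_eq_Cons)
    also have "pos_eq \<dots> (i # k # j # Z2)" using ik by (simp add: pos_eq_comm distant_sym)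
    also have "pos_eq \<dots> (i # j # k # Z2)" using kj pos_eq_comm_at[of k j "[i]"] by simp
    finally show ?thesis using X' 3 by (auto simp: lcm_tail_adjacent adjacent_sym)
  qed
qed

lemma through_lcm_comm_adj_adj:
  assumes kj: "distant k j" and ik: "adjacent i k" and ij: "adjacent i j"
    and X: "pos_eq X (k # i # Z1)" and Z1: "pos_eq (k # Z1) (j # i # Z2)"
    and b: "pos_eq b (i # j # Z2)" and len: "length X = N"
  shows "\<exists>Z. pos_eq X (lcm_tail i j @ Z) \<and> pos_eq (k # b) (lcm_tail j i @ Z)"
proof -
  have lZ1: "length X = Suc (Suc (length Z1))" using pos_eq_length[OF X] by simp
  have lZ2: "length Z1 = Suc (length Z2)" using pos_eq_length[OF Z1] by simp
  obtain Z3 where "pos_eq Z1 (lcm_tail k j @ Z3)" "pos_eq (i # Z2) (lcm_tail j k @ Z3)"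
    using shorter[OF _ Z1] lZ1 len by auto
  then have Z3: "pos_eq Z1 (j # Z3)" "pos_eq (i # Z2) (k # Z3)"
    using kj by (auto simp: lcm_tail_distant distant_sym)
  obtain Z4 where "pos_eq Z2 (lcm_tail i k @ Z4)" "pos_eq Z3 (lcm_tail k i @ Z4)"
    using shorter[OF _ Z3(2)] lZ1 lZ2 len by auto
  then have Z4: "pos_eq Z2 (k # i # Z4)" "pos_eq Z3 (i # k # Z4)"
    using ik by (auto simp: lcm_tail_adjacent adjacent_sym)
  note X
  also have "pos_eq (k # i # Z1) (k # i # j # Z3)" using Z3 by (simp add: pos_eq_Cons)
  also have "pos_eq \<dots> (k # i # j # i # k # Z4)" using Z4 by (simp add: pos_eq_Cons)
  also have "pos_eq \<dots> (k # j # i # j # k # Z4)" using pos_eq_braid_at[of i j "[k]"] ij by simp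
  also have "pos_eq \<dots> (j # k # i # j # k # Z4)" using kj by (simp add: pos_eq_comm)
  also have "pos_eq \<dots> (j # k # i # k # j # Z4)"
    using pos_eq_comm_at[of j k "[j, k, i]"] kj by (simp add: distant_sym)
  also have "pos_eq \<dots> (j # i # k # i # j # Z4)"
    using pos_eq_braid_at[of k i "[j]"] ik by (simp add: adjacent_sym)
  finally have X': "pos_eq X (j # i # (k # i # j # Z4))" .
  have "pos_eq (k # b) (k # i # j # Z2)" using b by (simp add: pos_eq_Cons)
  also have "pos_eq \<dots> (k # i # j # k # i # Z4)" using Z4 by (simp add: pos_eq_Cons)
  also have "pos_eq \<dots> (k # i # k # j # i # Z4)"
    using pos_eq_comm_at[of j k "[k, i]"] kj by (simp add: distant_sym)
  also have "pos_eq \<dots> (i # k # i # j # i # Z4)" using ik by (simp add: pos_eq_braid adjacent_sym)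
  also have "pos_eq \<dots> (i # k # j # i # j # Z4)" using pos_eq_braid_at[of i j "[i, k]"] ij by simp
  also have "pos_eq \<dots> (i # j # k # i # j # Z4)" using pos_eq_comm_at[of k j "[i]"] kj by simp
  finally show ?thesis using X' ij by (auto simp: lcm_tail_adjacent adjacent_sym)
qed

lemma through_lcm_comm_adj:
  assumes kj: "distant k j" and ik: "adjacent i k"
    and X: "pos_eq X (k # i # Z1)" and b: "pos_eq (j # b) (i # k # Z1)"
    and len: "length X = N" "Suc (length b) = N"
  shows "\<exists>Z. pos_eq X (lcm_tail i j @ Z) \<and> pos_eq (k # b) (lcm_tail j i @ Z)"
proof -
  obtain Z2 where Z2: "pos_eq b (lcm_tail j i @ Z2)" "pos_eq (k # Z1) (lcm_tail i j @ Z2)"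
    using shorter[OF _ b] len by auto
  have "i \<noteq> j" using ik kj adjacent_not_distant distant_sym by blast
  then consider "adjacent i j" | "distant i j" using adjacent_or_distant by blast
  then show ?thesis
  proof cases
    case 1
    then show ?thesis using through_lcm_comm_adj_adj[OF kj ik 1 X _ _ len(1)] Z2
      by (simp add: lcm_tail_adjacent adjacent_sym)
  next
    case 2
    have Z1: "pos_eq (k # Z1) (j # Z2)" using Z2 2 by (simp add: lcm_tail_distant)
    have "length Z1 < N" using pos_eq_length[OF X] len by simp
    then obtain Z3 where "pos_eq Z1 (lcm_tail k j @ Z3)" "pos_eq Z2 (lcm_tail j k @ Z3)"
      using shorter[OF _ Z1] by auto
    then have Z3: "pos_eq Z1 (j # Z3)" "pos_eq Z2 (k # Z3)"
      using kj by (auto simp: lcm_tail_distant distant_sym)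
    note X
    also have "pos_eq (k # i # Z1) (k # i # j # Z3)" using Z3 by (simp add: pos_eq_Cons)
    also have "pos_eq \<dots> (k # j # i # Z3)" using pos_eq_comm_at[of i j "[k]"] 2 by simp
    also have "pos_eq \<dots> (j # k # i # Z3)" using kj by (simp add: pos_eq_comm)
    finally have X': "pos_eq X (j # (k # i # Z3))" .
    have "pos_eq (k # b) (k # i # Z2)" using Z2 2
      by (simp add: lcm_tail_distant distant_sym pos_eq_Cons)
    also have "pos_eq \<dots> (k # i # k # Z3)" using Z3 by (simp add: pos_eq_Cons)
    also have "pos_eq \<dots> (i # k # i # Z3)" using ik by (simp add: pos_eq_braid adjacent_sym)
    finally show ?thesis using X' 2 by (auto simp: lcm_tail_distant distant_sym)
  qed
qed

lemma through_lcm_comm: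
  assumes kj: "distant k j"
    and X: "pos_eq X (lcm_tail i k @ Z1)" and b: "pos_eq (j # b) (lcm_tail k i @ Z1)"
    and len: "length X = N" "Suc (length b) = N"
  shows "\<exists>Z. pos_eq X (lcm_tail i j @ Z) \<and> pos_eq (k # b) (lcm_tail j i @ Z)"
proof (cases "i = k")
  case True
  then have "pos_eq X (j # b)" using X b by simp (meson pos_eq_trans_sym)
  then show ?thesis using kj True by (auto simp: lcm_tail_distant distant_sym intro!: exI[of _ b])
next
  case False
  then consider "distant i k" | "adjacent i k" using adjacent_or_distant by blast
  then show ?thesis
  proof cases
    case 1
    then show ?thesis using through_lcm_comm_dist[OF kj 1 _ _ len(2)] X b
      by (simp add: lcm_tail_distant distant_sym)
  next
    case 2
    then show ?thesis using through_lcm_comm_adj[OF kj 2 _ _ len] X b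
      by (simp add: lcm_tail_adjacent adjacent_sym)
  qed
qed

lemma through_lcm_braid_dist_adj:
  assumes kj: "adjacent k j" and ik: "distant i k" and ij: "adjacent i j"
    and X: "pos_eq X (k # Z1)" and Z1: "pos_eq Z1 (j # i # Z2)"
    and b: "pos_eq (k # b) (i # j # Z2)" and len: "length X = N" "Suc (Suc (length b)) = N"
  shows "\<exists>Z. pos_eq X (lcm_tail i j @ Z) \<and> pos_eq (k # j # b) (lcm_tail j i @ Z)"
proof -
  obtain Z3 where "pos_eq b (lcm_tail k i @ Z3)" "pos_eq (j # Z2) (lcm_tail i k @ Z3)"
    using shorter[OF _ b] len by auto
  then have Z3: "pos_eq b (i # Z3)" "pos_eq (j # Z2) (k # Z3)"
    using ik by (auto simp: lcm_tail_distant distant_sym)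
  have "length Z2 < N" using pos_eq_length[OF X] pos_eq_length[OF Z1] len by simp
  then obtain Z4 where "pos_eq Z2 (lcm_tail j k @ Z4)" "pos_eq Z3 (lcm_tail k j @ Z4)"
    using shorter[OF _ Z3(2)] by auto
  then have Z4: "pos_eq Z2 (k # j # Z4)" "pos_eq Z3 (j # k # Z4)"
    using kj by (auto simp: lcm_tail_adjacent adjacent_sym)
  note X
  also have "pos_eq (k # Z1) (k # j # i # Z2)" using Z1 by (simp add: pos_eq_Cons)
  also have "pos_eq \<dots> (k # j # i # k # j # Z4)" using Z4 by (simp add: pos_eq_Cons)
  also have "pos_eq \<dots> (k # j # k # i # j # Z4)" using pos_eq_comm_at[of i k "[k, j]"] ik by simp
  also have "pos_eq \<dots> (j # k # j # i # j # Z4)" using kj by (simp add: pos_eq_braid)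
  also have "pos_eq \<dots> (j # k # i # j # i # Z4)"
    using pos_eq_braid_at[of j i "[j, k]"] ij by (simp add: adjacent_sym)
  also have "pos_eq \<dots> (j # i # k # j # i # Z4)"
    using pos_eq_comm_at[of k i "[j]"] ik by (simp add: distant_sym)
  finally have X': "pos_eq X (j # i # (k # j # i # Z4))" .
  have "pos_eq (k # j # b) (k # j # i # Z3)" using Z3 by (simp add: pos_eq_Cons)
  also have "pos_eq \<dots> (k # j # i # j # k # Z4)" using Z4 by (simp add: pos_eq_Cons)
  also have "pos_eq \<dots> (k # i # j # i # k # Z4)"
    using pos_eq_braid_at[of j i "[k]"] ij by (simp add: adjacent_sym)
  also have "pos_eq \<dots> (i # k # j # i # k # Z4)" using ik by (simp add: pos_eq_comm distant_sym)
  also have "pos_eq \<dots> (i # k # j # k # i # Z4)" using pos_eq_comm_at[of i k "[i, k, j]"] ik by simp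
  also have "pos_eq \<dots> (i # j # k # j # i # Z4)" using pos_eq_braid_at[of k j "[i]"] kj by simp
  finally show ?thesis using X' ij by (auto simp: lcm_tail_adjacent adjacent_sym)
qed

lemma through_lcm_braid_dist:
  assumes kj: "adjacent k j" and ik: "distant i k"
    and X: "pos_eq X (k # Z1)" and b: "pos_eq (j # k # b) (i # Z1)"
    and len: "length X = N" "Suc (Suc (length b)) = N"
  shows "\<exists>Z. pos_eq X (lcm_tail i j @ Z) \<and> pos_eq (k # j # b) (lcm_tail j i @ Z)"
proof -
  obtain Z2 where Z2: "pos_eq (k # b) (lcm_tail j i @ Z2)" "pos_eq Z1 (lcm_tail i j @ Z2)"
    using shorter[OF _ b] len by auto
  have "i \<noteq> j" using ik kj adjacent_not_distant distant_sym by blast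
  then consider "distant i j" | "adjacent i j" using adjacent_or_distant by blast
  then show ?thesis
  proof cases
    case 1
    obtain Z3 where "pos_eq b (lcm_tail k i @ Z3)" "pos_eq Z2 (lcm_tail i k @ Z3)"
      using shorter[of b k i Z2] Z2 1 len by (auto simp: lcm_tail_distant distant_sym)
    then have Z3: "pos_eq b (i # Z3)" "pos_eq Z2 (k # Z3)"
      using ik by (auto simp: lcm_tail_distant distant_sym)
    note X
    also have "pos_eq (k # Z1) (k # j # Z2)" using Z2 1 by (simp add: lcm_tail_distant pos_eq_Cons)
    also have "pos_eq \<dots> (k # j # k # Z3)" using Z3 by (simp add: pos_eq_Cons)
    also have "pos_eq \<dots> (j # k # j # Z3)" using kj by (simp add: pos_eq_braid)
    finally have X': "pos_eq X (j # (k # j # Z3))" .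
    have "pos_eq (k # j # b) (k # j # i # Z3)" using Z3 by (simp add: pos_eq_Cons)
    also have "pos_eq \<dots> (k # i # j # Z3)" using pos_eq_comm_at[of j i "[k]"] 1
      by (simp add: distant_sym)
    also have "pos_eq \<dots> (i # k # j # Z3)" using ik by (simp add: pos_eq_comm distant_sym)
    finally show ?thesis using X' 1 by (auto simp: lcm_tail_distant distant_sym)
  next
    case 2
    show ?thesis
      using through_lcm_braid_dist_adj[OF kj ik 2 X _ _ len] Z2 2
      by (simp add: lcm_tail_adjacent adjacent_sym)
  qed
qed

lemma through_lcm_braid_adj_dist:
  assumes kj: "adjacent k j" and ik: "adjacent i k" and ij: "distant i j"
    and X: "pos_eq X (k # i # Z1)" and Z1: "pos_eq (k # Z1) (j # Z2)"
    and b: "pos_eq (k # b) (i # Z2)" and len: "length X = N" "Suc (Suc (length b)) = N"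
  shows "\<exists>Z. pos_eq X (lcm_tail i j @ Z) \<and> pos_eq (k # j # b) (lcm_tail j i @ Z)"
proof -
  obtain Z3 where "pos_eq b (lcm_tail k i @ Z3)" "pos_eq Z2 (lcm_tail i k @ Z3)"
    using shorter[OF _ b] len by auto
  then have Z3: "pos_eq b (i # k # Z3)" "pos_eq Z2 (k # i # Z3)"
    using ik by (auto simp: lcm_tail_adjacent adjacent_sym)
  obtain Z4 where "pos_eq Z1 (lcm_tail k j @ Z4)" "pos_eq Z2 (lcm_tail j k @ Z4)"
    using shorter[OF _ Z1] pos_eq_length[OF X] len by auto
  then have Z4: "pos_eq Z1 (j # k # Z4)" "pos_eq Z2 (k # j # Z4)"
    using kj by (auto simp: lcm_tail_adjacent adjacent_sym)
  have lb: "length b = Suc (Suc (length Z3))" using pos_eq_length[OF Z3(1)] by simp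
  have "pos_eq (k # i # Z3) (k # j # Z4)" using Z3 Z4 by (meson pos_eq_sym rtranclp_trans)
  then have "pos_eq (i # Z3) (j # Z4)" using shorter_Cons_cancel len lb by simp
  then obtain Z5 where "pos_eq Z3 (lcm_tail i j @ Z5)" "pos_eq Z4 (lcm_tail j i @ Z5)"
    using shorter len lb by (metis Suc_lessD lessI)
  then have Z5: "pos_eq Z3 (j # Z5)" "pos_eq Z4 (i # Z5)"
    using ij by (auto simp: lcm_tail_distant distant_sym)
  note X
  also have "pos_eq (k # i # Z1) (k # i # j # k # Z4)" using Z4 by (simp add: pos_eq_Cons)
  also have "pos_eq \<dots> (k # i # j # k # i # Z5)" using Z5 by (simp add: pos_eq_Cons)
  also have "pos_eq \<dots> (k # j # i # k # i # Z5)" using pos_eq_comm_at[of i j "[k]"] ij by simp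
  also have "pos_eq \<dots> (k # j # k # i # k # Z5)" using pos_eq_braid_at[of i k "[k, j]"] ik by simp
  also have "pos_eq \<dots> (j # k # j # i # k # Z5)" using kj by (simp add: pos_eq_braid)
  finally have X': "pos_eq X (j # (k # j # i # k # Z5))" .
  have "pos_eq (k # j # b) (k # j # i # k # Z3)" using Z3 by (simp add: pos_eq_Cons)
  also have "pos_eq \<dots> (k # j # i # k # j # Z5)" using Z5 by (simp add: pos_eq_Cons)
  also have "pos_eq \<dots> (k # i # j # k # j # Z5)"
    using pos_eq_comm_at[of j i "[k]"] ij by (simp add: distant_sym)
  also have "pos_eq \<dots> (k # i # k # j # k # Z5)"
    using pos_eq_braid_at[of j k "[k, i]"] kj by (simp add: adjacent_sym)
  also have "pos_eq \<dots> (i # k # i # j # k # Z5)" using ik by (simp add: pos_eq_braid adjacent_sym)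
  also have "pos_eq \<dots> (i # k # j # i # k # Z5)" using pos_eq_comm_at[of i j "[i, k]"] ij by simp
  finally show ?thesis using X' ij by (auto simp: lcm_tail_distant distant_sym)
qed

lemma through_lcm_braid_adj:
  assumes kj: "adjacent k j" and ik: "adjacent i k"
    and X: "pos_eq X (k # i # Z1)" and b: "pos_eq (j # k # b) (i # k # Z1)"
    and len: "length X = N" "Suc (Suc (length b)) = N"
  shows "\<exists>Z. pos_eq X (lcm_tail i j @ Z) \<and> pos_eq (k # j # b) (lcm_tail j i @ Z)"
proof -
  obtain Z2 where Z2: "pos_eq (k # b) (lcm_tail j i @ Z2)" "pos_eq (k # Z1) (lcm_tail i j @ Z2)"
    using shorter[OF _ b] len by auto
  have "\<not> adjacent i j" using ik kj by (auto simp: adjacent_def)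
  then consider "i = j" | "distant i j" using adjacent_or_distant by blast
  then show ?thesis
  proof cases
    case 1
    have "pos_eq (k # b) (k # Z1)" using Z2 1 by simp (meson pos_eq_trans_sym)
    then have "pos_eq b Z1" using shorter_Cons_cancel len by simp
    then have "pos_eq (k # j # b) (k # i # Z1)" using 1 by (simp add: pos_eq_Cons)
    then show ?thesis using X 1 by auto
  next
    case 2
    show ?thesis
      using through_lcm_braid_adj_dist[OF kj ik 2 X _ _ len] Z2 2
      by (simp add: lcm_tail_distant distant_sym)
  qed
qed

lemma through_lcm_braid:
  assumes kj: "adjacent k j"
    and X: "pos_eq X (lcm_tail i k @ Z1)" and b: "pos_eq (j # k # b) (lcm_tail k i @ Z1)"
    and len: "length X = N" "Suc (Suc (length b)) = N"
  shows "\<exists>Z. pos_eq X (lcm_tail i j @ Z) \<and> pos_eq (k # j # b) (lcm_tail j i @ Z)"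
proof (cases "i = k")
  case True
  then have "pos_eq X (j # k # b)" using X b by simp (meson pos_eq_trans_sym)
  then show ?thesis using kj True by (auto simp: lcm_tail_adjacent adjacent_sym intro!: exI[of _ b])
next
  case False
  then consider "distant i k" | "adjacent i k" using adjacent_or_distant by blast
  then show ?thesis
  proof cases
    case 1
    then show ?thesis using through_lcm_braid_dist[OF kj 1 _ _ len] X b
      by (simp add: lcm_tail_distant distant_sym)
  next
    case 2
    then show ?thesis using through_lcm_braid_adj[OF kj 2 _ _ len] X b
      by (simp add: lcm_tail_adjacent adjacent_sym)
  qed
qed

lemma through_lcm_step:
  assumes X: "pos_eq X (lcm_tail i k @ Z1)" and V: "pos_eq V (lcm_tail k i @ Z1)"
    and st: "pos_step (k # V) (j # Y)" and len: "length X = N" "length V = N"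
  shows "\<exists>Z. pos_eq X (lcm_tail i j @ Z) \<and> pos_eq Y (lcm_tail j i @ Z)"
proof -
  consider (same) "k = j" "pos_step V Y"
    | (comm) b where "distant k j" "V = j # b" "Y = k # b"
    | (braid) b where "adjacent k j" "V = j # k # b" "Y = k # j # b"
    using pos_step_Cons_cases[OF st] by blast
  then show ?thesis
  proof cases
    case same
    then have "pos_eq Y (lcm_tail j i @ Z1)" using V
      by (meson pos_step_sym r_into_rtranclp rtranclp_trans)
    then show ?thesis using X same by blast
  next
    case (comm b)
    then show ?thesis using through_lcm_comm[OF _ X] V len by simp
  next
    case (braid b)
    then show ?thesis using through_lcm_braid[OF _ X] V len by simp
  qed
qed

end

lemma pos_eq_Cons_through_lcm:
  "pos_eq (i # X) (j # Y) \<Longrightarrow> \<exists>Z. pos_eq X (lcm_tail i j @ Z) \<and> pos_eq Y (lcm_tail j i @ Z)"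
proof (induction "length X" arbitrary: i j X Y rule: less_induct)
  case less
  have shorter: "\<And>X' a b Y'. length X' < length X \<Longrightarrow> pos_eq (a # X') (b # Y') \<Longrightarrow>
      \<exists>Z. pos_eq X' (lcm_tail a b @ Z) \<and> pos_eq Y' (lcm_tail b a @ Z)"
    using less.hyps by blast
  have "\<forall>j Y. W = j # Y \<longrightarrow> (\<exists>Z. pos_eq X (lcm_tail i j @ Z) \<and> pos_eq Y (lcm_tail j i @ Z))"
    if "pos_eq (i # X) W" for W
    using that
  proof (induction rule: rtranclp_induct)
    case base
    then show ?case by auto
  next
    case (step W W')
    show ?case
    proof (intro allI impI)
      fix j Y
      assume W': "W' = j # Y"
      obtain k V where W: "W = k # V" using pos_eq_length[OF step.hyps(1)] by (cases W) auto
      obtain Z1 where "pos_eq X (lcm_tail i k @ Z1)" "pos_eq V (lcm_tail k i @ Z1)"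
        using step.IH W by blast
      moreover have "length V = length X" using pos_eq_length[OF step.hyps(1)] W by simp
      ultimately show "\<exists>Z. pos_eq X (lcm_tail i j @ Z) \<and> pos_eq Y (lcm_tail j i @ Z)"
        using through_lcm_step[OF shorter] step.hyps(2) W W' by blast
    qed
  qed
  then show ?case using less.prems by blast
qed

lemma pos_eq_Cons_cancel: "pos_eq (a#X) (a#Y) \<Longrightarrow> pos_eq X Y"
proof -
  assume "pos_eq (a#X) (a#Y)"
  then obtain Z where "pos_eq X Z" "pos_eq Y Z" using pos_eq_Cons_through_lcm[of a X a Y] by auto
  then show ?thesis by (meson pos_eq_sym rtranclp_trans)
qed

lemma pos_eq_left_cancel: "pos_eq (x@X) (x@Y) \<Longrightarrow> pos_eq X Y"
  by (induction x) (auto dest: pos_eq_Cons_cancel)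

lemma braid_rel_rev: "braid_rel l r \<Longrightarrow> braid_rel (rev l) (rev r)"
  by (induction rule: braid_rel.induct) (auto intro: braid_rel.intros distant_sym braid_rel_sym)

lemma pos_step_rev: "pos_step u v \<Longrightarrow> pos_step (rev u) (rev v)"
  unfolding pos_step_def by (metis append.assoc braid_rel_rev rev_append)

lemma pos_eq_rev: "pos_eq u v \<Longrightarrow> pos_eq (rev u) (rev v)"
  by (induction rule: rtranclp_induct) (auto intro: pos_step_rev rtranclp.rtrancl_into_rtrancl)

lemma pos_eq_right_cancel: "pos_eq (X@x) (Y@x) \<Longrightarrow> pos_eq X Y"
proof -
  assume "pos_eq (X@x) (Y@x)"
  then have "pos_eq (rev x @ rev X) (rev x @ rev Y)" using pos_eq_rev by fastforce
  then have "pos_eq (rev X) (rev Y)" by (rule pos_eq_left_cancel)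
  then show ?thesis using pos_eq_rev by fastforce
qed

section \<open>The Garside element\<close>

definition desc :: "nat \<Rightarrow> nat list" where "desc m = rev [1..<Suc m]"
definition asc :: "nat \<Rightarrow> nat list" where "asc m = [1..<Suc m]"
definition delta_letters :: "nat \<Rightarrow> nat list" where "delta_letters n = concat (map desc [1..<n])"

lemma desc_0[simp]: "desc 0 = []" by (simp add: desc_def)
lemma desc_Suc: "desc (Suc m) = Suc m # desc m" by (simp add: desc_def)
lemma asc_Suc: "asc (Suc m) = asc m @ [Suc m]" by (simp add: asc_def)
lemma set_desc: "set (desc m) = {1..m}" by (auto simp: desc_def)
lemma rev_desc: "rev (desc m) = asc m" by (simp add: desc_def asc_def)
lemma delta_letters_Suc: "1 \<le> m \<Longrightarrow> delta_letters (Suc m) = delta_letters m @ desc m"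
  by (simp add: delta_letters_def)
lemma set_delta_letters: "set (delta_letters n) = {1..<n}"
  by (induction n) (auto simp: delta_letters_def set_desc)
lemma desc_last: "1 \<le> m \<Longrightarrow> \<exists>c. desc m = c @ [1]"
  by (cases m) (auto simp: desc_def upt_rec)

lemma delta_letters_2: "delta_letters 2 = [1]"
  by (simp add: delta_letters_def desc_def numeral_2_eq_2)

lemma pos_eq_commute_past: "(\<forall>x\<in>set W. distant a x) \<Longrightarrow> pos_eq (a#W) (W@[a])"
proof (induction W)
  case Nil then show ?case by simp
next
  case (Cons b W)
  have "pos_eq (a#b#W) (b#a#W)" using Cons.prems by (simp add: pos_eq_comm)
  also have "pos_eq \<dots> (b#W@[a])" using Cons by (simp add: pos_eq_Cons)
  finally show ?case by simp
qed

lemma pos_eq_letter_desc: "1 \<le> j \<Longrightarrow> j < m \<Longrightarrow> pos_eq (j # desc m) (desc m @ [j+1])"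
proof (induction m arbitrary: j)
  case 0 then show ?case by simp
next
  case (Suc m)
  show ?case
  proof (cases "j < m")
    case True
    have "pos_eq (j # desc (Suc m)) (Suc m # j # desc m)" using True
      by (simp add: desc_Suc pos_eq_comm distant_def)
    also have "pos_eq \<dots> (Suc m # desc m @ [j+1])" using Suc True by (simp add: pos_eq_Cons)
    finally show ?thesis by (simp add: desc_Suc)
  next
    case False
    then have jm: "j = m" "1 \<le> m" using Suc by auto
    then obtain m' where m': "m = Suc m'" by (cases m) auto
    have "pos_eq (j # desc (Suc m)) (m # Suc m # m # desc m')" using jm m' by (simp add: desc_Suc)
    also have "pos_eq \<dots> (Suc m # m # Suc m # desc m')" using pos_eq_braid[of m "Suc m"]
      by (simp add: adjacent_def)
    also have "pos_eq \<dots> (Suc m # m # desc m' @ [Suc m])"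
      using pos_eq_commute_past[of "desc m'" "Suc m"] m'
      by (auto simp: set_desc distant_def intro!: pos_eq_Cons)
    finally show ?thesis using jm m' by (simp add: desc_Suc)
  qed
qed

lemma pos_eq_asc_letter: "1 \<le> j \<Longrightarrow> j < m \<Longrightarrow> pos_eq (asc m @ [j]) ((j+1) # asc m)"
  using pos_eq_rev[OF pos_eq_letter_desc[of j m]] by (simp add: rev_desc)

lemma delta_letters_Suc_asc: "1 \<le> m \<Longrightarrow> pos_eq (delta_letters (Suc m)) (asc m @ delta_letters m)"
proof (induction m rule: nat_induct_at_least)
  case base then show ?case by (simp add: delta_letters_def desc_def asc_def)
next
  case (Suc m)
  have "delta_letters (Suc (Suc m)) = delta_letters (Suc m) @ desc (Suc m)"
    by (simp add: delta_letters_Suc)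
  also have "pos_eq \<dots> (asc m @ delta_letters m @ desc (Suc m))" using pos_eq_append_right[OF Suc.IH]
    by simp
  also have "asc m @ delta_letters m @ desc (Suc m) = asc m @ (delta_letters m @ [Suc m]) @ desc m"
    by (simp add: desc_Suc)
  also have "pos_eq \<dots> (asc m @ (Suc m # delta_letters m) @ desc m)"
    using pos_eq_commute_past[of "delta_letters m" "Suc m"]
    by (intro pos_eq_context) (rule pos_eq_sym, auto simp: set_delta_letters distant_def)
  also have "\<dots> = asc (Suc m) @ delta_letters (Suc m)" using Suc
    by (simp add: asc_Suc delta_letters_Suc)
  finally show ?case .
qed

lemma pos_eq_letter_delta:
  "2 \<le> n \<Longrightarrow> 1 \<le> j \<Longrightarrow> j < n \<Longrightarrow> pos_eq (j # delta_letters n) (delta_letters n @ [n-j])"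
proof (induction n arbitrary: j rule: nat_induct_at_least)
  case base then have "j = 1" by simp
  then show ?case using delta_letters_2 by simp
next
  case (Suc n)
  show ?case
  proof (cases "j < n")
    case True
    have "j # delta_letters (Suc n) = (j # delta_letters n) @ desc n" using Suc
      by (simp add: delta_letters_Suc)
    also have "pos_eq \<dots> ((delta_letters n @ [n-j]) @ desc n)" using Suc True
      by (intro pos_eq_append_right) auto
    also have "\<dots> = delta_letters n @ ((n-j) # desc n)" by simp
    also have "pos_eq \<dots> (delta_letters n @ (desc n @ [n-j+1]))"
      using True Suc pos_eq_letter_desc[of "n-j" n] by (intro pos_eq_append_left) auto
    finally show ?thesis using Suc True by (simp add: delta_letters_Suc Suc_diff_le)
  next
    case False
    then have j: "j = n" using Suc by auto
    have IH: "pos_eq ((n - 1) # delta_letters n) (delta_letters n @ [1])"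
      using Suc.IH[of "n - 1"] Suc.hyps by simp
    have asc: "pos_eq (asc n @ [n - 1]) (n # asc n)"
      using pos_eq_asc_letter[of "n - 1" n] Suc.hyps by simp
    have "pos_eq (j # delta_letters (Suc n)) (j # asc n @ delta_letters n)"
      using delta_letters_Suc_asc Suc by (simp add: pos_eq_Cons)
    also have "pos_eq \<dots> (asc n @ (n - 1) # delta_letters n)"
      using pos_eq_sym[OF pos_eq_append_right[OF asc, of "delta_letters n"]] j by simp
    also have "pos_eq \<dots> (asc n @ delta_letters n @ [1])" using pos_eq_append_left[OF IH] .
    also have "pos_eq \<dots> (delta_letters (Suc n) @ [1])"
      using pos_eq_sym[OF pos_eq_append_right[OF delta_letters_Suc_asc, of n "[1]"]] Suc.hyps
      by simp
    finally show ?thesis using j by simp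
  qed
qed

lemma delta_letters_right_divisible:
  "2 \<le> n \<Longrightarrow> 1 \<le> j \<Longrightarrow> j < n \<Longrightarrow> \<exists>c. pos_eq (delta_letters n) (c @ [j])"
proof (induction n arbitrary: j rule: nat_induct_at_least)
  case base then have "j = 1" by simp
  then show ?case using delta_letters_2 by (auto intro!: exI[of _ "[]"])
next
  case (Suc n)
  show ?case
  proof (cases "j = 1")
    case True
    obtain c where "desc n = c @ [1]" using desc_last Suc by fastforce
    then show ?thesis using True Suc
      by (auto simp: delta_letters_Suc intro!: exI[of _ "delta_letters n @ c"])
  next
    case False
    then obtain c where c: "pos_eq (delta_letters n) (c @ [j-1])" using Suc by fastforce
    have "delta_letters (Suc n) = delta_letters n @ desc n" using Suc
      by (simp add: delta_letters_Suc)
    also have "pos_eq \<dots> (c @ ((j-1) # desc n))" using pos_eq_append_right[OF c] by simp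
    also have "pos_eq \<dots> (c @ (desc n @ [j]))" using pos_eq_letter_desc[of "j-1" n] False Suc
      by (intro pos_eq_append_left) auto
    finally show ?thesis by (metis append.assoc)
  qed
qed

definition delta_rquot :: "nat \<Rightarrow> nat \<Rightarrow> nat list" where
  "delta_rquot n j = (SOME c. pos_eq (delta_letters n) (c @ [j]))"

lemma delta_letters_rquot:
  "2 \<le> n \<Longrightarrow> 1 \<le> j \<Longrightarrow> j < n \<Longrightarrow> pos_eq (delta_letters n) (delta_rquot n j @ [j])"
  unfolding delta_rquot_def by (rule someI_ex) (rule delta_letters_right_divisible)

lemma delta_letters_rquot_left:
  "2 \<le> n \<Longrightarrow> 1 \<le> j \<Longrightarrow> j < n \<Longrightarrow> pos_eq (delta_letters n) ((n-j) # delta_rquot n j)"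
proof -
  assume a: "2 \<le> n" "1 \<le> j" "j < n"
  have "pos_eq ((n-j) # delta_letters n) (delta_letters n @ [j])"
    using pos_eq_letter_delta[of n "n-j"] a by auto
  moreover have "pos_eq ((n-j) # delta_letters n) (((n-j) # delta_rquot n j) @ [j])"
    using delta_letters_rquot[OF a] by (simp add: pos_eq_Cons)
  ultimately have "pos_eq (delta_letters n @ [j]) (((n-j) # delta_rquot n j) @ [j])"
    by (meson pos_eq_sym rtranclp_trans)
  then show ?thesis by (rule pos_eq_right_cancel)
qed

lemma set_delta_rquot: "2 \<le> n \<Longrightarrow> 1 \<le> j \<Longrightarrow> j < n \<Longrightarrow> set (delta_rquot n j) \<subseteq> {1..<n}"
  using pos_eq_set[OF delta_letters_rquot] set_delta_letters by auto

lemma delta_letters_left_divisible: "2 \<le> n \<Longrightarrow> 1 \<le> j \<Longrightarrow> j < n \<Longrightarrow> \<exists>c. pos_eq (delta_letters n) (j # c)"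
proof -
  assume a: "2 \<le> n" "1 \<le> j" "j < n"
  have e: "n - (n-j) = j" using a by simp
  have "pos_eq (delta_letters n) ((n-(n-j)) # delta_rquot n (n-j))"
    using delta_letters_rquot_left[of n "n-j"] a by simp
  then show ?thesis unfolding e by blast
qed

definition pos_word :: "nat list \<Rightarrow> bword" where "pos_word A = map (\<lambda>j. (j, True)) A"
definition valid_letters :: "nat \<Rightarrow> nat list \<Rightarrow> bool" where
  "valid_letters n A = (\<forall>x\<in>set A. 1 \<le> x \<and> x < n)"

lemma valid_letters_append[simp]:
  "valid_letters n (A @ B) = (valid_letters n A \<and> valid_letters n B)"
  by (auto simp: valid_letters_def)
lemma valid_letters_Cons[simp]: "valid_letters n (a # B) = (1 \<le> a \<and> a < n \<and> valid_letters n B)"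
  by (auto simp: valid_letters_def)
lemma valid_letters_Nil[simp]: "valid_letters n []" by (simp add: valid_letters_def)

declare be_trans[trans]

lemma braid_eq_append_left: "braid_eq n x y \<Longrightarrow> braid_eq n (u@x) (u@y)"
  using be_ctxt[of n x y u "[]"] by simp
lemma braid_eq_append_right: "braid_eq n x y \<Longrightarrow> braid_eq n (x@v) (y@v)"
  using be_ctxt[of n x y "[]" v] by simp
lemma braid_eq_append: "braid_eq n a a' \<Longrightarrow> braid_eq n b b' \<Longrightarrow> braid_eq n (a@b) (a'@b')"
  by (meson braid_eq_append_right braid_eq_append_left be_trans)

definition invalid_letters :: "nat \<Rightarrow> bword \<Rightarrow> bword" where
  "invalid_letters n w = filter (\<lambda>p. \<not> (1 \<le> fst p \<and> fst p < n)) w"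

lemma invalid_letters_braid_eq: "braid_eq n x y \<Longrightarrow> invalid_letters n x = invalid_letters n y"
  by (induction rule: braid_eq.induct) (auto simp: invalid_letters_def)

lemma valid_word_iff_invalid_letters: "valid_word n w \<longleftrightarrow> invalid_letters n w = []"
  by (auto simp: valid_word_def invalid_letters_def filter_empty_conv)

lemma braid_eq_valid: "braid_eq n x y \<Longrightarrow> valid_word n x \<Longrightarrow> valid_word n y"
  using invalid_letters_braid_eq valid_word_iff_invalid_letters by metis
lemma braid_eq_valid_rev: "braid_eq n x y \<Longrightarrow> valid_word n y \<Longrightarrow> valid_word n x"
  using invalid_letters_braid_eq valid_word_iff_invalid_letters by metis

lemma valid_word_append[simp]: "valid_word n (u@v) = (valid_word n u \<and> valid_word n v)"
  by (auto simp: valid_word_def)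
lemma valid_word_Cons[simp]: "valid_word n (a#v) = (1 \<le> fst a \<and> fst a < n \<and> valid_word n v)"
  by (auto simp: valid_word_def)
lemma valid_word_Nil[simp]: "valid_word n []" by (simp add: valid_word_def)
lemma valid_word_pos_word[simp]: "valid_word n (pos_word A) = valid_letters n A"
  by (auto simp: valid_word_def valid_letters_def pos_word_def)

lemma pos_word_append[simp]: "pos_word (A @ B) = pos_word A @ pos_word B"
  by (simp add: pos_word_def)
lemma pos_word_Nil[simp]: "pos_word [] = []" by (simp add: pos_word_def)

lemma inv_word_append[simp]: "inv_word (a@b) = inv_word b @ inv_word a" by (simp add: inv_word_def)
lemma inv_word_Cons: "inv_word ((j,b)#w) = inv_word w @ [(j, \<not>b)]" by (simp add: inv_word_def)
lemma inv_word_Nil[simp]: "inv_word [] = []" by (simp add: inv_word_def)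
lemma inv_word_inv_word[simp]: "inv_word (inv_word w) = w"
  by (induction w) (auto simp: inv_word_def)
lemma valid_inv_word[simp]: "valid_word n (inv_word w) = valid_word n w"
  by (auto simp: inv_word_def valid_word_def)

lemma braid_eq_inv_right: "valid_word n w \<Longrightarrow> braid_eq n (w @ inv_word w) []"
proof (induction w)
  case Nil then show ?case by (simp add: be_refl)
next
  case (Cons a w)
  obtain j b where a: "a = (j,b)" by (cases a)
  have "braid_eq n ((j,b) # (w @ inv_word w) @ [(j, \<not>b)]) ((j,b) # [] @ [(j, \<not>b)])"
    using Cons a by (intro be_ctxt[of n _ _ "[(j,b)]", simplified]) auto
  also have "braid_eq n \<dots> []" using be_cancel[of j n b] Cons.prems a by simp
  finally show ?case using a by (simp add: inv_word_Cons)
qed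

lemma braid_eq_inv_left: "valid_word n w \<Longrightarrow> braid_eq n (inv_word w @ w) []"
  using braid_eq_inv_right[of n "inv_word w"] by simp

lemma braid_eq_left_cancel: "valid_word n u \<Longrightarrow> braid_eq n (u@x) (u@y) \<Longrightarrow> braid_eq n x y"
proof -
  assume v: "valid_word n u" and e: "braid_eq n (u@x) (u@y)"
  have "braid_eq n x ((inv_word u @ u) @ x)"
    using braid_eq_append_right[OF braid_eq_inv_left[OF v], of x] be_sym by simp
  also have "braid_eq n \<dots> (inv_word u @ (u @ y))" using braid_eq_append_left[OF e] by simp
  also have "braid_eq n \<dots> ((inv_word u @ u) @ y)" by (simp add: be_refl)
  also have "braid_eq n \<dots> y" using braid_eq_append_right[OF braid_eq_inv_left[OF v], of y] by simp
  finally show ?thesis .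
qed

lemma braid_eq_append_left_iff:
  "valid_word n u \<Longrightarrow> braid_eq n (u@x) y \<longleftrightarrow> braid_eq n x (inv_word u @ y)"
proof
  assume v: "valid_word n u" and e: "braid_eq n (u@x) y"
  have "braid_eq n (u @ x) (u @ (inv_word u @ y))"
    using e braid_eq_append_right[OF braid_eq_inv_right[OF v], of y] be_sym be_trans
    by (metis append.assoc append_Nil)
  then show "braid_eq n x (inv_word u @ y)" using braid_eq_left_cancel v by blast
next
  assume v: "valid_word n u" and e: "braid_eq n x (inv_word u @ y)"
  have "braid_eq n (u@x) ((u @ inv_word u) @ y)" using braid_eq_append_left[OF e] by simp
  also have "braid_eq n \<dots> y" using braid_eq_append_right[OF braid_eq_inv_right[OF v], of y] by simp
  finally show "braid_eq n (u@x) y" .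
qed

definition exp_sum :: "bword \<Rightarrow> int" where
  "exp_sum w = sum_list (map (\<lambda>p. if snd p then 1 else -1) w)"

lemma exp_sum_append[simp]: "exp_sum (u@v) = exp_sum u + exp_sum v" by (simp add: exp_sum_def)
lemma exp_sum_Nil[simp]: "exp_sum [] = 0" by (simp add: exp_sum_def)
lemma exp_sum_pos_word[simp]: "exp_sum (pos_word A) = int (length A)"
  by (induction A) (auto simp: exp_sum_def pos_word_def)
lemma exp_sum_inv_word[simp]: "exp_sum (inv_word w) = - exp_sum w"
  by (induction w) (auto simp: exp_sum_def inv_word_def)
lemma exp_sum_braid_eq: "braid_eq n x y \<Longrightarrow> exp_sum x = exp_sum y"
  by (induction rule: braid_eq.induct) (auto simp: exp_sum_def)

section \<open>Embedding of the positive monoid\<close>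

text \<open>The action of \<open>\<tau>^k\<close> on letters: \<open>\<tau>\<close> maps \<open>\<sigma>_j\<close> to \<open>\<sigma>_(n-j)\<close>.\<close>

definition flip_pow :: "nat \<Rightarrow> nat \<Rightarrow> nat list \<Rightarrow> nat list" where
  "flip_pow n k X = (if even k then X else map (\<lambda>j. n - j) X)"
definition delta_letters_pow :: "nat \<Rightarrow> nat \<Rightarrow> nat list" where
  "delta_letters_pow n k = concat (replicate k (delta_letters n))"

text \<open>\<^term>\<open>frac_of n w = (k, A)\<close> represents w as \<open>\<Delta>^(-k) A\<close>, using
  \<open>\<sigma>_j^(-1) = \<Delta>^(-1) (delta_rquot n j)\<close>.\<close>

fun frac_of :: "nat \<Rightarrow> bword \<Rightarrow> nat \<times> nat list" where
  "frac_of n [] = (0, [])"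
| "frac_of n ((j,b)#w) = (case frac_of n w of (k,A) \<Rightarrow>
      if b then (k, flip_pow n k [j] @ A) else (Suc k, flip_pow n k (delta_rquot n j) @ A))"

definition frac_eq :: "nat \<Rightarrow> nat \<times> nat list \<Rightarrow> nat \<times> nat list \<Rightarrow> bool" where
  "frac_eq n P Q \<longleftrightarrow>
    pos_eq (delta_letters_pow n (fst Q) @ snd P) (delta_letters_pow n (fst P) @ snd Q)"

definition frac_mult :: "nat \<Rightarrow> nat \<times> nat list \<Rightarrow> nat \<times> nat list \<Rightarrow> nat \<times> nat list" where
  "frac_mult n P Q = (fst P + fst Q, flip_pow n (fst Q) (snd P) @ snd Q)"

lemma valid_letters_flip_pow: "valid_letters n X \<Longrightarrow> valid_letters n (flip_pow n k X)"
  by (auto simp: valid_letters_def flip_pow_def)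
lemma flip_pow_append[simp]: "flip_pow n k (A @ B) = flip_pow n k A @ flip_pow n k B"
  by (simp add: flip_pow_def)
lemma flip_pow_Nil[simp]: "flip_pow n k [] = []" by (simp add: flip_pow_def)
lemma flip_pow_0[simp]: "flip_pow n 0 X = X" by (simp add: flip_pow_def)
lemma flip_pow_flip_pow: "valid_letters n X \<Longrightarrow> flip_pow n a (flip_pow n b X) = flip_pow n (a+b) X"
proof -
  assume "valid_letters n X"
  then have "map (\<lambda>j. n - j) (map (\<lambda>j. n - j) X) = X"
    by (induction X) auto
  then show ?thesis by (auto simp: flip_pow_def)
qed

lemma delta_letters_pow_add:
  "delta_letters_pow n (a+b) = delta_letters_pow n a @ delta_letters_pow n b"
  by (simp add: delta_letters_pow_def replicate_add)
lemma delta_letters_pow_comm: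
  "delta_letters_pow n a @ delta_letters_pow n b = delta_letters_pow n b @ delta_letters_pow n a"
  by (metis add.commute delta_letters_pow_add)
lemma delta_letters_pow_Suc: "delta_letters_pow n (Suc l) = delta_letters n @ delta_letters_pow n l"
  by (simp add: delta_letters_pow_def)
lemma delta_letters_pow_0[simp]: "delta_letters_pow n 0 = []" by (simp add: delta_letters_pow_def)

lemma pos_eq_delta_conj:
  "2 \<le> n \<Longrightarrow> valid_letters n X \<Longrightarrow> pos_eq (X @ delta_letters n) (delta_letters n @ flip_pow n 1 X)"
proof (induction X)
  case Nil then show ?case by (simp add: flip_pow_def)
next
  case (Cons x X)
  have "pos_eq ((x#X) @ delta_letters n) (x # delta_letters n @ flip_pow n 1 X)" using Cons
    by (simp add: pos_eq_Cons)
  also have "pos_eq \<dots> ((delta_letters n @ [n-x]) @ flip_pow n 1 X)"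
    using pos_eq_letter_delta[of n x] Cons.prems
    by (metis append_Cons pos_eq_append_right valid_letters_Cons)
  finally show ?case by (simp add: flip_pow_def)
qed

lemma pos_eq_delta_pow_conj:
  "2 \<le> n \<Longrightarrow> valid_letters n X \<Longrightarrow>
    pos_eq (X @ delta_letters_pow n l) (delta_letters_pow n l @ flip_pow n l X)"
proof (induction l arbitrary: X)
  case 0 then show ?case by simp
next
  case (Suc l)
  have "X @ delta_letters_pow n (Suc l) = (X @ delta_letters n) @ delta_letters_pow n l"
    by (simp add: delta_letters_pow_Suc)
  also have "pos_eq \<dots> ((delta_letters n @ flip_pow n 1 X) @ delta_letters_pow n l)"
    using pos_eq_delta_conj Suc.prems by (intro pos_eq_append_right) auto
  also have "\<dots> = delta_letters n @ (flip_pow n 1 X @ delta_letters_pow n l)" by simp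
  also have "pos_eq \<dots> (delta_letters n @ (delta_letters_pow n l @ flip_pow n l (flip_pow n 1 X)))"
    using Suc valid_letters_flip_pow by (intro pos_eq_append_left) auto
  also have "\<dots> = delta_letters_pow n (Suc l) @ flip_pow n (Suc l) X"
    using flip_pow_flip_pow[OF Suc.prems(2), of l 1]
    by (simp add: delta_letters_pow_Suc)
  finally show ?case .
qed

lemma valid_letters_frac_of: "2 \<le> n \<Longrightarrow> valid_word n w \<Longrightarrow> valid_letters n (snd (frac_of n w))"
proof (induction w)
  case Nil then show ?case by simp
next
  case (Cons a w)
  obtain j b where a: "a = (j,b)" by (cases a)
  obtain k A where FA: "frac_of n w = (k, A)" by (cases "frac_of n w")
  have v: "1 \<le> j" "j < n" "valid_word n w" using Cons.prems a by (auto simp: valid_word_def)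
  have "valid_letters n A" using Cons.IH v FA Cons.prems by simp
  moreover have "valid_letters n (delta_rquot n j)" using set_delta_rquot[of n j] v Cons.prems
    by (auto simp: valid_letters_def)
  ultimately show ?case using a FA v by (auto simp: valid_letters_flip_pow)
qed

lemma frac_of_append:
  "2 \<le> n \<Longrightarrow> valid_word n u \<Longrightarrow> frac_of n (u @ v) = frac_mult n (frac_of n u) (frac_of n v)"
proof (induction u)
  case Nil then show ?case by (simp add: frac_mult_def)
next
  case (Cons a u)
  obtain j b where a: "a = (j,b)" by (cases a)
  obtain k A where FA: "frac_of n u = (k, A)" by (cases "frac_of n u")
  obtain l B where FB: "frac_of n v = (l, B)" by (cases "frac_of n v")
  have v: "1 \<le> j" "j < n" "valid_word n u" using Cons.prems a by (auto simp: valid_word_def)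
  have IH: "frac_of n (u @ v) = (k + l, flip_pow n l A @ B)" using Cons.IH v Cons.prems FA FB
    by (simp add: frac_mult_def)
  have vA: "valid_letters n A" using valid_letters_frac_of[OF Cons.prems(1) v(3)] FA by simp
  have vc: "valid_letters n (delta_rquot n j)" using set_delta_rquot[of n j] v Cons.prems
    by (auto simp: valid_letters_def)
  have vj: "valid_letters n [j]" using v by simp
  show ?case using a IH FA FB flip_pow_flip_pow[OF vc, of l k] flip_pow_flip_pow[OF vj, of l k]
    by (auto simp: frac_mult_def add.commute)
qed

lemma frac_eq_refl: "frac_eq n P P" by (simp add: frac_eq_def delta_letters_pow_comm)
lemma frac_eq_sym: "frac_eq n P Q \<Longrightarrow> frac_eq n Q P" by (simp add: frac_eq_def pos_eq_sym)
lemma frac_eq_trans: "frac_eq n P Q \<Longrightarrow> frac_eq n Q R \<Longrightarrow> frac_eq n P R"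
proof -
  assume a: "frac_eq n P Q" "frac_eq n Q R"
  obtain k A where P: "P = (k,A)" by (cases P)
  obtain l B where Q: "Q = (l,B)" by (cases Q)
  obtain m C where R: "R = (m,C)" by (cases R)
  have 1: "pos_eq (delta_letters_pow n l @ A) (delta_letters_pow n k @ B)"
    and 2: "pos_eq (delta_letters_pow n m @ B) (delta_letters_pow n l @ C)"
    using a P Q R by (auto simp: frac_eq_def)
  have "delta_letters_pow n l @ (delta_letters_pow n m @ A) =
      delta_letters_pow n m @ (delta_letters_pow n l @ A)"
    by (metis append.assoc delta_letters_pow_comm)
  also have "pos_eq \<dots> (delta_letters_pow n m @ (delta_letters_pow n k @ B))" using 1
    by (rule pos_eq_append_left)
  also have "\<dots> = delta_letters_pow n k @ (delta_letters_pow n m @ B)"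
    by (metis append.assoc delta_letters_pow_comm)
  also have "pos_eq \<dots> (delta_letters_pow n k @ (delta_letters_pow n l @ C))" using 2
    by (rule pos_eq_append_left)
  also have "\<dots> = delta_letters_pow n l @ (delta_letters_pow n k @ C)"
    by (metis append.assoc delta_letters_pow_comm)
  finally have "pos_eq (delta_letters_pow n m @ A) (delta_letters_pow n k @ C)"
    by (rule pos_eq_left_cancel)
  then show ?thesis using P R by (simp add: frac_eq_def)
qed

lemma frac_mult_cong_left:
  "2 \<le> n \<Longrightarrow> valid_letters n (snd P) \<Longrightarrow> valid_letters n (snd P') \<Longrightarrow> frac_eq n P P' \<Longrightarrow>
    frac_eq n (frac_mult n P Q) (frac_mult n P' Q)"
proof -
  assume n: "2 \<le> n" and v: "valid_letters n (snd P)" "valid_letters n (snd P')"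
    and e: "frac_eq n P P'"
  obtain k A where P: "P = (k,A)" by (cases P)
  obtain k' A' where P': "P' = (k',A')" by (cases P')
  obtain l B where Q: "Q = (l,B)" by (cases Q)
  have e': "pos_eq (delta_letters_pow n k' @ A) (delta_letters_pow n k @ A')" using e P P'
    by (simp add: frac_eq_def)
  have "delta_letters_pow n (k'+l) @ flip_pow n l A @ B =
      delta_letters_pow n k' @ (delta_letters_pow n l @ flip_pow n l A) @ B"
    by (simp add: delta_letters_pow_add)
  also have "pos_eq \<dots> (delta_letters_pow n k' @ (A @ delta_letters_pow n l) @ B)"
  proof -
    have vA: "valid_letters n A" using v P by simp
    have "pos_eq (delta_letters_pow n l @ flip_pow n l A) (A @ delta_letters_pow n l)"
      using pos_eq_sym[OF pos_eq_delta_pow_conj[OF n vA, of l]] .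
    then show ?thesis by (rule pos_eq_context)
  qed
  also have "\<dots> = (delta_letters_pow n k' @ A) @ delta_letters_pow n l @ B" by simp
  also have "pos_eq \<dots> ((delta_letters_pow n k @ A') @ delta_letters_pow n l @ B)" using e'
    by (rule pos_eq_append_right)
  also have "\<dots> = delta_letters_pow n k @ (A' @ delta_letters_pow n l) @ B" by simp
  also have "pos_eq \<dots> (delta_letters_pow n k @ (delta_letters_pow n l @ flip_pow n l A') @ B)"
  proof -
    have "pos_eq (A' @ delta_letters_pow n l) (delta_letters_pow n l @ flip_pow n l A')"
      using pos_eq_delta_pow_conj[OF n, of A' l] v P' by simp
    then show ?thesis by (rule pos_eq_context)
  qed
  also have "\<dots> = delta_letters_pow n (k+l) @ flip_pow n l A' @ B"
    by (simp add: delta_letters_pow_add)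
  finally show ?thesis using P P' Q by (simp add: frac_eq_def frac_mult_def)
qed

lemma frac_mult_cong_right:
  "2 \<le> n \<Longrightarrow> valid_letters n (snd P) \<Longrightarrow> frac_eq n Q Q' \<Longrightarrow>
    frac_eq n (frac_mult n P Q) (frac_mult n P Q')"
proof -
  assume n: "2 \<le> n" and v: "valid_letters n (snd P)" and e: "frac_eq n Q Q'"
  obtain k A where P: "P = (k,A)" by (cases P)
  obtain l B where Q: "Q = (l,B)" by (cases Q)
  obtain l' B' where Q': "Q' = (l',B')" by (cases Q')
  have vA: "valid_letters n A" using v P by simp
  have e': "pos_eq (delta_letters_pow n l' @ B) (delta_letters_pow n l @ B')" using e Q Q'
    by (simp add: frac_eq_def)
  have t1: "flip_pow n l' (flip_pow n (l + l') A) = flip_pow n l A"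
  proof -
    have "flip_pow n l' (flip_pow n (l + l') A) = flip_pow n (l' + (l + l')) A"
      by (rule flip_pow_flip_pow[OF vA])
    also have "\<dots> = flip_pow n l A" by (simp add: flip_pow_def)
    finally show ?thesis .
  qed
  have t2: "flip_pow n l (flip_pow n (l + l') A) = flip_pow n l' A"
  proof -
    have "flip_pow n l (flip_pow n (l + l') A) = flip_pow n (l + (l + l')) A"
      by (rule flip_pow_flip_pow[OF vA])
    also have "\<dots> = flip_pow n l' A" by (simp add: flip_pow_def)
    finally show ?thesis .
  qed
  have v2: "valid_letters n (flip_pow n (l + l') A)" using valid_letters_flip_pow[OF vA] .
  have "delta_letters_pow n (k+l') @ flip_pow n l A @ B =
      delta_letters_pow n k @ (delta_letters_pow n l' @ flip_pow n l' (flip_pow n (l + l') A)) @ B"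
    by (simp add: delta_letters_pow_add t1)
  also have "pos_eq \<dots>
      (delta_letters_pow n k @ (flip_pow n (l + l') A @ delta_letters_pow n l') @ B)"
    using pos_eq_sym[OF pos_eq_delta_pow_conj[OF n v2, of l']] by (rule pos_eq_context)
  also have "\<dots> = (delta_letters_pow n k @ flip_pow n (l + l') A) @ (delta_letters_pow n l' @ B)"
    by simp
  also have "pos_eq \<dots>
      ((delta_letters_pow n k @ flip_pow n (l + l') A) @ (delta_letters_pow n l @ B'))"
    using e' by (rule pos_eq_append_left)
  also have "\<dots> = delta_letters_pow n k @ (flip_pow n (l + l') A @ delta_letters_pow n l) @ B'"
    by simp
  also have "pos_eq \<dots>
      (delta_letters_pow n k @ (delta_letters_pow n l @ flip_pow n l (flip_pow n (l + l') A)) @ B')"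
    using pos_eq_delta_pow_conj[OF n v2, of l] by (rule pos_eq_context)
  also have "\<dots> = delta_letters_pow n (k+l) @ flip_pow n l' A @ B'"
    by (simp add: delta_letters_pow_add t2)
  finally show ?thesis using P Q Q' by (simp add: frac_eq_def frac_mult_def)
qed

lemma frac_of_pos_word: "frac_of n (pos_word A) = (0, A)"
  by (induction A) (auto simp: pos_word_def)

lemma frac_eq_of_braid_eq:
  assumes n2: "2 \<le> n"
  shows "braid_eq n x y \<Longrightarrow> valid_word n x \<Longrightarrow> frac_eq n (frac_of n x) (frac_of n y)"
proof (induction rule: braid_eq.induct)
  case (be_refl w) show ?case by (rule frac_eq_refl)
next
  case (be_sym x y)
  then have "valid_word n x" using braid_eq_valid_rev by blast
  then show ?case using be_sym frac_eq_sym by blast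
next
  case (be_trans x y z)
  then show ?case using braid_eq_valid frac_eq_trans by blast
next
  case (be_ctxt x y u v)
  have vu: "valid_word n u" and vx: "valid_word n x" and vv: "valid_word n v" using be_ctxt.prems
    by auto
  have vy: "valid_word n y" using braid_eq_valid[OF be_ctxt.hyps vx] .
  have e1: "frac_of n (u@x@v) = frac_mult n (frac_of n u) (frac_mult n (frac_of n x) (frac_of n v))"
    using frac_of_append[OF n2 vu] frac_of_append[OF n2 vx] by simp
  have e2: "frac_of n (u@y@v) = frac_mult n (frac_of n u) (frac_mult n (frac_of n y) (frac_of n v))"
    using frac_of_append[OF n2 vu] frac_of_append[OF n2 vy] by simp
  have "frac_eq n (frac_mult n (frac_of n x) (frac_of n v))
      (frac_mult n (frac_of n y) (frac_of n v))"
    using frac_mult_cong_left be_ctxt.IH valid_letters_frac_of vx vy n2 by blast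
  then show ?case unfolding e1 e2 using frac_mult_cong_right valid_letters_frac_of vu n2 by blast
next
  case (be_cancel j b)
  have vc: "valid_letters n (delta_rquot n j)" using set_delta_rquot[of n j] be_cancel n2
    by (auto simp: valid_letters_def)
  show ?case
  proof (cases b)
    case True
    have "pos_eq ((n-j) # delta_rquot n j) (delta_letters n)"
      using pos_eq_sym[OF delta_letters_rquot_left[of n j]] be_cancel n2 by simp
    then show ?thesis using True by (simp add: frac_eq_def delta_letters_pow_def flip_pow_def)
  next
    case False
    have "pos_eq (delta_rquot n j @ [j]) (delta_letters n)"
      using pos_eq_sym[OF delta_letters_rquot[of n j]] be_cancel n2 by simp
    then show ?thesis using False by (simp add: frac_eq_def delta_letters_pow_def flip_pow_def)
  qed
next
  case (be_comm j k)
  have "distant j k" using be_comm by (simp add: distant_def)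
  then show ?case by (simp add: frac_eq_def pos_eq_comm)
next
  case (be_braid j)
  have "adjacent j (j+1)" by (simp add: adjacent_def)
  then show ?case by (simp add: frac_eq_def pos_eq_braid)
qed

theorem pos_eq_of_braid_eq:
  "2 \<le> n \<Longrightarrow> valid_letters n A \<Longrightarrow> braid_eq n (pos_word A) (pos_word B) \<Longrightarrow> pos_eq A B"
  using frac_eq_of_braid_eq[of n "pos_word A" "pos_word B"]
  by (simp add: frac_of_pos_word frac_eq_def)

lemma braid_eq_of_pos_step:
  "pos_step u v \<Longrightarrow> valid_letters n u \<Longrightarrow> braid_eq n (pos_word u) (pos_word v)"
proof -
  assume "pos_step u v" "valid_letters n u"
  then obtain x y l r where pr: "braid_rel l r" and u: "u = x@l@y" and v: "v = x@r@y"
    and valid_letters: "valid_letters n l"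
    unfolding pos_step_def by auto
  have "braid_eq n (pos_word l) (pos_word r)" using pr valid_letters
  proof cases
    case (comm a b)
    then show ?thesis
    proof (cases "a + 2 \<le> b")
      case True then show ?thesis using comm valid_letters be_comm[of a b n]
        by (simp add: pos_word_def)
    next
      case False
      then have "b + 2 \<le> a" using comm by (simp add: distant_def)
      then show ?thesis using comm valid_letters be_comm[of b a n] be_sym
        by (simp add: pos_word_def)
    qed
  next
    case (braid a b)
    then show ?thesis
    proof (cases "b = a + 1")
      case True then show ?thesis using braid valid_letters be_braid[of a n]
        by (simp add: pos_word_def)
    next
      case False
      then have "a = b + 1" using braid by (simp add: adjacent_def)
      then show ?thesis using braid valid_letters be_braid[of b n] be_sym
        by (simp add: pos_word_def)
    qed
  qed
  then show ?thesis using u v be_ctxt by simp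
qed

lemma braid_eq_of_pos_eq: "pos_eq u v \<Longrightarrow> valid_letters n u \<Longrightarrow> braid_eq n (pos_word u) (pos_word v)"
proof (induction rule: rtranclp_induct)
  case base then show ?case by (simp add: be_refl)
next
  case (step y z)
  have "valid_letters n y" using pos_eq_set[OF step.hyps(1)] step.prems
    by (simp add: valid_letters_def)
  then show ?case using step braid_eq_of_pos_step be_trans by blast
qed

section \<open>Prefix order and least common multiples\<close>

lemma positive_iff_pos_word: "positive n w \<longleftrightarrow> (\<exists>A. valid_letters n A \<and> braid_eq n w (pos_word A))"
proof
  assume "positive n w"
  then obtain p where p: "valid_word n p" "\<forall>x\<in>set p. snd x" "braid_eq n w p"
    by (auto simp: positive_def)
  have "p = pos_word (map fst p)" using p(2) by (induction p) (auto simp: pos_word_def)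
  then show "\<exists>A. valid_letters n A \<and> braid_eq n w (pos_word A)" using p
    by (metis valid_word_pos_word)
next
  assume "\<exists>A. valid_letters n A \<and> braid_eq n w (pos_word A)"
  then obtain A where A: "valid_letters n A" "braid_eq n w (pos_word A)" by blast
  then have "valid_word n (pos_word A)" "\<forall>x\<in>set (pos_word A). snd x"
    by (auto simp: pos_word_def valid_word_def valid_letters_def)
  then show "positive n w" using A(2) unfolding positive_def by blast
qed

lemma positive_pos_word: "valid_letters n A \<Longrightarrow> positive n (pos_word A)"
  using positive_iff_pos_word be_refl by blast
lemma positive_Nil: "positive n []" using positive_pos_word[of n "[]"] by simp
lemma positive_valid: "positive n w \<Longrightarrow> valid_word n w"
  using positive_iff_pos_word braid_eq_valid_rev valid_word_pos_word by metis
lemma positive_braid_eq: "braid_eq n w w' \<Longrightarrow> positive n w \<Longrightarrow> positive n w'"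
  unfolding positive_iff_pos_word by (meson be_sym be_trans)
lemma positive_append: "positive n a \<Longrightarrow> positive n b \<Longrightarrow> positive n (a@b)"
  unfolding positive_iff_pos_word by (metis braid_eq_append pos_word_append valid_letters_append)
lemma exp_sum_nonneg: "positive n w \<Longrightarrow> 0 \<le> exp_sum w"
  unfolding positive_iff_pos_word using exp_sum_braid_eq by fastforce
lemma positive_exp_sum_0: "positive n w \<Longrightarrow> exp_sum w = 0 \<Longrightarrow> braid_eq n w []"
  unfolding positive_iff_pos_word using exp_sum_braid_eq by fastforce

lemma prec_refl: "prec n a a" unfolding prec_def using positive_Nil be_refl by fastforce
lemma prec_trans: "prec n a b \<Longrightarrow> prec n b c \<Longrightarrow> prec n a c"
  unfolding prec_def by (metis append.assoc braid_eq_append_right be_trans positive_append)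
lemma prec_cong_left: "braid_eq n a a' \<Longrightarrow> prec n a z \<Longrightarrow> prec n a' z"
  unfolding prec_def by (meson braid_eq_append_right be_sym be_trans)
lemma prec_cong_right: "braid_eq n z z' \<Longrightarrow> prec n a z \<Longrightarrow> prec n a z'"
  unfolding prec_def by (meson be_trans)
lemma prec_append: "positive n c \<Longrightarrow> prec n a (a @ c)" unfolding prec_def using be_refl by blast
lemma prec_append_left: "prec n a b \<Longrightarrow> prec n (u@a) (u@b)"
  unfolding prec_def by (metis append.assoc braid_eq_append_left)
lemma prec_append_left_iff: "valid_word n u \<Longrightarrow> prec n (u@a) (u@b) \<longleftrightarrow> prec n a b"
  unfolding prec_def by (metis append.assoc braid_eq_left_cancel braid_eq_append_left)
lemma prec_positive: "positive n a \<Longrightarrow> prec n a z \<Longrightarrow> positive n z"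
  unfolding prec_def using positive_append positive_braid_eq by blast
lemma positive_prec: "positive n z \<Longrightarrow> prec n [] z"
  unfolding prec_def using be_refl by fastforce

lemma prec_append_left_shift: "valid_word n u \<Longrightarrow> prec n (u@a) z \<longleftrightarrow> prec n a (inv_word u @ z)"
  unfolding prec_def using braid_eq_append_left_iff by (metis append.assoc)

lemma prec_iff_positive: "valid_word n a \<Longrightarrow> prec n a z \<longleftrightarrow> positive n (inv_word a @ z)"
  using prec_append_left_shift[of n a "[]" z] positive_prec
  by (metis append_Nil2 positive_Nil prec_def prec_positive be_sym)

lemma prec_antisym: "valid_word n a \<Longrightarrow> prec n a b \<Longrightarrow> prec n b a \<Longrightarrow> braid_eq n a b"
proof -
  assume v: "valid_word n a" and ab: "prec n a b" and ba: "prec n b a"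
  obtain c where c: "positive n c" "braid_eq n (a@c) b" using ab by (auto simp: prec_def)
  obtain d where d: "positive n d" "braid_eq n (b@d) a" using ba by (auto simp: prec_def)
  have "exp_sum c + exp_sum d = 0" using exp_sum_braid_eq[OF c(2)] exp_sum_braid_eq[OF d(2)] by simp
  then have "exp_sum c = 0" using exp_sum_nonneg[OF c(1)] exp_sum_nonneg[OF d(1)] by linarith
  then have "braid_eq n c []" using positive_exp_sum_0 c by blast
  then have "braid_eq n (a@c) a" using braid_eq_append_left[of n c "[]" a] by simp
  then show ?thesis using c be_sym be_trans by blast
qed

lemma prec_exp_sum: "prec n a b \<Longrightarrow> exp_sum a \<le> exp_sum b"
  unfolding prec_def using exp_sum_nonneg exp_sum_braid_eq by fastforce

lemma prec_obtain_pos_word: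
  assumes "prec n a b"
  obtains U where "valid_letters n U" "braid_eq n (a @ pos_word U) b"
proof -
  obtain c where c: "positive n c" "braid_eq n (a @ c) b" using assms by (auto simp: prec_def)
  obtain U where U: "valid_letters n U" "braid_eq n c (pos_word U)"
    using c(1) positive_iff_pos_word by blast
  have "braid_eq n (a @ pos_word U) b" using braid_eq_append_left[OF be_sym[OF U(2)]] c(2) be_trans
    by blast
  then show ?thesis using U(1) that by blast
qed

definition prec_lcm :: "nat \<Rightarrow> bword \<Rightarrow> bword \<Rightarrow> bword \<Rightarrow> bool" where
  "prec_lcm n a b l = (prec n a l \<and> prec n b l \<and> (\<forall>z. prec n a z \<longrightarrow> prec n b z \<longrightarrow> prec n l z))"

lemma prec_lcm_cong:
  assumes "braid_eq n a a'" "braid_eq n b b'" "braid_eq n l l'" "prec_lcm n a b l"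
  shows "prec_lcm n a' b' l'"
  using assms unfolding prec_lcm_def by (meson be_sym prec_cong_left prec_cong_right)

lemma prec_lcm_append_left:
  assumes "valid_word n u" "prec_lcm n a b l"
  shows "prec_lcm n (u @ a) (u @ b) (u @ l)"
  unfolding prec_lcm_def
proof (intro conjI allI impI)
  show "prec n (u @ a) (u @ l)" "prec n (u @ b) (u @ l)"
    using assms prec_append_left by (auto simp: prec_lcm_def)
  fix z
  assume "prec n (u @ a) z" "prec n (u @ b) z"
  then show "prec n (u @ l) z" using assms by (simp add: prec_lcm_def prec_append_left_shift)
qed

lemma prec_lcm_through:
  assumes "valid_word n c"
    and a: "prec_lcm n a c (c @ u)" and b: "prec_lcm n b c (c @ v)" and uv: "prec_lcm n u v w"
    and c: "\<And>z. prec n a z \<Longrightarrow> prec n b z \<Longrightarrow> prec n c z"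
  shows "prec_lcm n a b (c @ w)"
  unfolding prec_lcm_def
proof (intro conjI allI impI)
  have "prec n (c @ u) (c @ w)" "prec n (c @ v) (c @ w)"
    using uv by (auto simp: prec_lcm_def intro: prec_append_left)
  moreover have "prec n a (c @ u)" "prec n b (c @ v)" using a b by (simp_all add: prec_lcm_def)
  ultimately show "prec n a (c @ w)" "prec n b (c @ w)" using prec_trans by blast+
  fix z
  assume "prec n a z" "prec n b z"
  then have "prec n (c @ u) z" "prec n (c @ v) z" using a b c by (simp_all add: prec_lcm_def)
  then have "prec n w (inv_word c @ z)"
    using uv \<open>valid_word n c\<close> by (simp add: prec_lcm_def prec_append_left_shift)
  then show "prec n (c @ w) z" using \<open>valid_word n c\<close> by (simp add: prec_append_left_shift)
qed

lemma pos_eq_lcm_tail_sym: "pos_eq (i # lcm_tail i j) (j # lcm_tail j i)"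
proof (cases "i = j")
  case False
  then consider "adjacent i j" | "distant i j" using adjacent_or_distant by blast
  then show ?thesis
    by cases (simp_all add: lcm_tail_adjacent lcm_tail_distant adjacent_sym distant_sym
        pos_eq_braid pos_eq_comm)
qed simp

lemma valid_letters_lcm_tail:
  "1 \<le> i \<Longrightarrow> i < n \<Longrightarrow> 1 \<le> j \<Longrightarrow> j < n \<Longrightarrow> valid_letters n (lcm_tail i j)"
  by (auto simp: lcm_tail_def valid_letters_def)

lemma prec_pos_word_Cons: "valid_letters n A \<Longrightarrow> prec n (pos_word [i]) (pos_word (i # A))"
  using prec_append[OF positive_pos_word, of n A "pos_word [i]"] by (simp add: pos_word_def)

lemma prec_letter_lcm:
  assumes n: "2 \<le> n" and i: "1 \<le> i" "i < n"
    and "prec n (pos_word [i]) z" and "prec n (pos_word [j]) z"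
  shows "prec n (pos_word (i # lcm_tail i j)) z"
proof -
  obtain X where X: "valid_letters n X" "braid_eq n (pos_word [i] @ pos_word X) z"
    using prec_obtain_pos_word assms by blast
  obtain Y where Y: "valid_letters n Y" "braid_eq n (pos_word [j] @ pos_word Y) z"
    using prec_obtain_pos_word assms by blast
  have "braid_eq n (pos_word [i] @ pos_word X) (pos_word [j] @ pos_word Y)"
    using X(2) Y(2) be_sym be_trans by blast
  then have "braid_eq n (pos_word (i # X)) (pos_word (j # Y))" by (simp add: pos_word_def)
  then have "pos_eq (i # X) (j # Y)" using pos_eq_of_braid_eq[OF n] X(1) i by simp
  then obtain Z where Z: "pos_eq X (lcm_tail i j @ Z)" using pos_eq_Cons_through_lcm by blast
  have vZ: "valid_letters n Z" using pos_eq_set[OF Z] X(1) by (auto simp: valid_letters_def)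
  have "braid_eq n (pos_word [i] @ pos_word (lcm_tail i j @ Z)) z"
    using braid_eq_append_left[OF braid_eq_of_pos_eq[OF Z X(1)]] X(2) be_sym be_trans by blast
  then show ?thesis using positive_pos_word[OF vZ] by (auto simp: prec_def pos_word_def)
qed

context
  fixes n :: nat and M :: int
  assumes n: "2 \<le> n"
    and lcm_below: "\<And>A B m. exp_sum m < M \<Longrightarrow> valid_letters n A \<Longrightarrow> valid_letters n B \<Longrightarrow>
      valid_word n m \<Longrightarrow> prec n (pos_word A) m \<Longrightarrow> prec n (pos_word B) m \<Longrightarrow>
      \<exists>L. valid_letters n L \<and> prec_lcm n (pos_word A) (pos_word B) (pos_word L)"
begin

lemma lcm_below_Cons:
  assumes "valid_letters n (i # A)" "valid_letters n B" "valid_word n m" "exp_sum m \<le> M"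
    and "prec n (pos_word (i # A)) m" "prec n (pos_word (i # B)) m"
  shows "\<exists>L. valid_letters n L \<and> prec_lcm n (pos_word (i # A)) (pos_word (i # B)) (pos_word L)"
proof -
  let ?m = "inv_word [(i, True)] @ m"
  have vi: "valid_word n [(i, True)]" using assms(1) by simp
  have Cons: "pos_word (i # X) = [(i, True)] @ pos_word X" for X by (simp add: pos_word_def)
  have es: "exp_sum ?m < M" using assms(4) by (simp add: exp_sum_def inv_word_def)
  have vA: "valid_letters n A" and vm: "valid_word n ?m" using assms(1,3) by simp_all
  have "prec n (pos_word A) ?m" and "prec n (pos_word B) ?m"
    using assms(5,6) prec_append_left_shift[OF vi] by (simp_all only: Cons)
  from lcm_below[OF es vA assms(2) vm this]
  obtain L where "valid_letters n L" "prec_lcm n (pos_word A) (pos_word B) (pos_word L)"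
    by blast
  then show ?thesis
    using prec_lcm_append_left[OF vi] assms(1) by (metis Cons valid_letters_Cons)
qed

lemma lcm_below_Cons_Cons:
  assumes vA: "valid_letters n (i # A)" and vB: "valid_letters n (j # B)"
    and m: "valid_word n m" "exp_sum m \<le> M"
    and Am: "prec n (pos_word (i # A)) m" and Bm: "prec n (pos_word (j # B)) m"
  shows "\<exists>L. valid_letters n L \<and> prec_lcm n (pos_word (i # A)) (pos_word (j # B)) (pos_word L)"
proof -
  define c where "c = i # lcm_tail i j"
  have vij: "valid_letters n (lcm_tail i j)" and vji: "valid_letters n (lcm_tail j i)"
    using vA vB valid_letters_lcm_tail by simp_all
  have vc: "valid_letters n c" using vA vij by (simp add: c_def)
  have c_sym: "braid_eq n (pos_word c) (pos_word (j # lcm_tail j i))"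
    using braid_eq_of_pos_eq[OF pos_eq_lcm_tail_sym] vc by (simp add: c_def)
  have c_below: "prec n (pos_word c) z"
    if Az: "prec n (pos_word (i # A)) z" and Bz: "prec n (pos_word (j # B)) z" for z
    using prec_letter_lcm[OF n _ _ prec_trans[OF _ Az] prec_trans[OF _ Bz]]
      prec_pos_word_Cons vA vB by (simp add: c_def)
  have cm: "prec n (pos_word c) m" using c_below Am Bm .
  obtain L1 where L1: "prec_lcm n (pos_word (i # A)) (pos_word c) (pos_word L1)"
    using lcm_below_Cons[OF vA vij m Am cm[unfolded c_def]] by (auto simp: c_def)
  obtain L2 where "prec_lcm n (pos_word (j # B)) (pos_word (j # lcm_tail j i)) (pos_word L2)"
    using lcm_below_Cons[OF vB vji m Bm prec_cong_left[OF c_sym cm]] by blast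
  then have L2: "prec_lcm n (pos_word (j # B)) (pos_word c) (pos_word L2)"
    using prec_lcm_cong be_refl be_sym[OF c_sym] by blast
  obtain U where U: "valid_letters n U" "braid_eq n (pos_word c @ pos_word U) (pos_word L1)"
    using L1 prec_obtain_pos_word unfolding prec_lcm_def by blast
  obtain V where V: "valid_letters n V" "braid_eq n (pos_word c @ pos_word V) (pos_word L2)"
    using L2 prec_obtain_pos_word unfolding prec_lcm_def by blast
  have AU: "prec_lcm n (pos_word (i # A)) (pos_word c) (pos_word c @ pos_word U)"
    using prec_lcm_cong[OF be_refl be_refl be_sym[OF U(2)] L1] .
  have BV: "prec_lcm n (pos_word (j # B)) (pos_word c) (pos_word c @ pos_word V)"
    using prec_lcm_cong[OF be_refl be_refl be_sym[OF V(2)] L2] .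
  let ?m = "inv_word (pos_word c) @ m"
  have es: "exp_sum ?m < M" using m by (simp add: c_def)
  have vm: "valid_word n ?m" using vc m by simp
  have "prec n (pos_word U) ?m" "prec n (pos_word V) ?m"
    using AU BV Am Bm cm vc by (simp_all add: prec_lcm_def prec_append_left_shift)
  from lcm_below[OF es U(1) V(1) vm this]
  obtain W where W: "valid_letters n W" "prec_lcm n (pos_word U) (pos_word V) (pos_word W)"
    by blast
  have "prec_lcm n (pos_word (i # A)) (pos_word (j # B)) (pos_word (c @ W))"
    using prec_lcm_through[OF _ AU BV W(2) c_below] vc by simp
  then show ?thesis using vc W(1) by (metis valid_letters_append)
qed

end

lemma prec_lcm_exists:
  assumes "2 \<le> n"
  shows "valid_letters n A \<Longrightarrow> valid_letters n B \<Longrightarrow> valid_word n m \<Longrightarrow>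
    prec n (pos_word A) m \<Longrightarrow> prec n (pos_word B) m \<Longrightarrow>
    \<exists>L. valid_letters n L \<and> prec_lcm n (pos_word A) (pos_word B) (pos_word L)"
proof (induction "nat (exp_sum m)" arbitrary: A B m rule: less_induct)
  case less
  have lcm_below: "\<exists>L. valid_letters n L \<and> prec_lcm n (pos_word A') (pos_word B') (pos_word L)"
    if "exp_sum m' < exp_sum m" "valid_letters n A'" "valid_letters n B'" "valid_word n m'"
      "prec n (pos_word A') m'" "prec n (pos_word B') m'" for A' B' m'
    using less.hyps[of m'] that prec_exp_sum[OF that(5)] by simp
  show ?case
  proof (cases A)
    case Nil
    then show ?thesis using less.prems
      by (auto simp: prec_lcm_def prec_refl positive_prec positive_pos_word)
  next
    case A: (Cons i A1)
    show ?thesis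
    proof (cases B)
      case Nil
      then show ?thesis using less.prems
        by (auto simp: prec_lcm_def prec_refl positive_prec positive_pos_word)
    next
      case (Cons j B1)
      then show ?thesis
        using lcm_below_Cons_Cons[OF assms lcm_below, where A = A1 and B = B1] less.prems A
        by simp
    qed
  qed
qed

lemma is_lcm_exists:
  assumes n: "2 \<le> n" and a: "positive n a" and b: "positive n b"
    and m: "valid_word n m" and am: "prec n a m" and bm: "prec n b m"
  obtains s where "valid_word n s" "positive n s" "is_lcm n a b (b @ s)"
proof -
  obtain A where A: "valid_letters n A" "braid_eq n a (pos_word A)"
    using a positive_iff_pos_word by blast
  obtain B where B: "valid_letters n B" "braid_eq n b (pos_word B)"
    using b positive_iff_pos_word by blast
  obtain L where "prec_lcm n (pos_word A) (pos_word B) (pos_word L)"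
    using prec_lcm_exists[OF n A(1) B(1) m prec_cong_left[OF A(2) am] prec_cong_left[OF B(2) bm]]
    by blast
  then have L: "prec_lcm n a b (pos_word L)"
    using prec_lcm_cong[OF be_sym[OF A(2)] be_sym[OF B(2)] be_refl] by blast
  then have "prec n b (pos_word L)" by (simp add: prec_lcm_def)
  then obtain U where U: "valid_letters n U" "braid_eq n (b @ pos_word U) (pos_word L)"
    using prec_obtain_pos_word by blast
  have "prec_lcm n a b (b @ pos_word U)" using prec_lcm_cong[OF be_refl be_refl be_sym[OF U(2)] L] .
  moreover have "positive n (b @ pos_word U)"
    using positive_append[OF b positive_pos_word[OF U(1)]] .
  ultimately have "is_lcm n a b (b @ pos_word U)" by (auto simp: is_lcm_def prec_lcm_def)
  then show ?thesis using U(1) positive_pos_word[OF U(1)] by (intro that) simp_all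
qed

section \<open>Powers of \<open>\<Delta>\<close> and \<open>\<tau>\<close>\<close>

lemma delta_word_pos_word: "delta_word n = pos_word (delta_letters n)"
  by (simp add: delta_word_def pos_word_def delta_letters_def map_concat desc_def comp_def)

lemma valid_delta_letters: "valid_letters n (delta_letters n)"
  by (auto simp: valid_letters_def set_delta_letters)
lemma valid_delta_word[simp]: "valid_word n (delta_word n)"
  by (simp add: delta_word_pos_word valid_delta_letters)

lemma valid_concat_replicate: "valid_word n x \<Longrightarrow> valid_word n (concat (replicate m x))"
  by (induction m) auto

lemma valid_delta_pow[simp]: "valid_word n (delta_pow n k)"
  by (simp add: delta_pow_def valid_concat_replicate)

lemma concat_replicate_comm: "concat (replicate m x) @ x = x @ concat (replicate m x)"
  by (induction m) auto

lemma delta_pow_0[simp]: "delta_pow n 0 = []" by (simp add: delta_pow_def)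
lemma delta_pow_1: "delta_pow n 1 = delta_word n" by (simp add: delta_pow_def)
lemma delta_pow_minus_1: "delta_pow n (-1) = inv_word (delta_word n)" by (simp add: delta_pow_def)

lemma delta_pow_of_nat: "delta_pow n (int l) = pos_word (delta_letters_pow n l)"
  by (simp add: delta_pow_def delta_letters_pow_def delta_word_pos_word pos_word_def map_concat)

lemma delta_pow_nonpos:
  "k \<le> 0 \<Longrightarrow> delta_pow n k = concat (replicate (nat (-k)) (inv_word (delta_word n)))"
  by (auto simp: delta_pow_def)

lemma delta_pow_succ: "braid_eq n (delta_pow n (k+1)) (delta_pow n k @ delta_word n)"
proof (cases "0 \<le> k")
  case True
  then have "nat (k+1) = Suc (nat k)" by simp
  then show ?thesis using True by (simp add: delta_pow_def concat_replicate_comm be_refl)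
next
  case False
  define m where "m = nat (-(k+1))"
  have 1: "delta_pow n (k+1) = concat (replicate m (inv_word (delta_word n)))"
    using False delta_pow_nonpos[of "k+1" n] by (simp add: m_def)
  have "nat (-k) = Suc m" using False by (simp add: m_def)
  then have 2:
      "delta_pow n k = concat (replicate m (inv_word (delta_word n))) @ inv_word (delta_word n)"
    using False delta_pow_nonpos[of k n] by (simp add: concat_replicate_comm)
  have "braid_eq n (delta_pow n k @ delta_word n)
      (concat (replicate m (inv_word (delta_word n))) @ [])"
    unfolding 2 using braid_eq_append_left[OF braid_eq_inv_left[OF valid_delta_word]] by simp
  then show ?thesis using 1 be_sym by simp
qed

lemma delta_pow_pred: "braid_eq n (delta_pow n (k - 1)) (delta_pow n k @ inv_word (delta_word n))"
proof (cases "k \<le> 0")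
  case True
  then have "nat (-(k-1)) = Suc (nat (-k))" by simp
  then show ?thesis using True delta_pow_nonpos[of k n] delta_pow_nonpos[of "k-1" n]
    by (simp add: concat_replicate_comm be_refl)
next
  case False
  define m where "m = nat (k - 1)"
  have 1: "delta_pow n (k - 1) = concat (replicate m (delta_word n))" using False
    by (simp add: m_def delta_pow_def)
  have "nat k = Suc m" using False by (simp add: m_def)
  then have 2: "delta_pow n k = concat (replicate m (delta_word n)) @ delta_word n"
    using False by (simp add: concat_replicate_comm delta_pow_def)
  have "braid_eq n (delta_pow n k @ inv_word (delta_word n))
      (concat (replicate m (delta_word n)) @ [])"
    unfolding 2 using braid_eq_append_left[OF braid_eq_inv_right[OF valid_delta_word]] by simp
  then show ?thesis using 1 be_sym by simp
qed

lemma delta_pow_add: "braid_eq n (delta_pow n (a+b)) (delta_pow n a @ delta_pow n b)"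
proof (induction b rule: int_induct[where k=0])
  case base then show ?case by (simp add: be_refl)
next
  case (step1 b)
  have "braid_eq n (delta_pow n (a+(b+1))) (delta_pow n (a+b) @ delta_word n)"
    using delta_pow_succ[of n "a+b"] by (simp add: add.assoc)
  also have "braid_eq n \<dots> ((delta_pow n a @ delta_pow n b) @ delta_word n)"
    by (rule braid_eq_append_right[OF step1(2)])
  also have "braid_eq n \<dots> (delta_pow n a @ delta_pow n (b+1))"
    using braid_eq_append_left[OF be_sym[OF delta_pow_succ[of n b]]] by simp
  finally show ?case .
next
  case (step2 b)
  have "braid_eq n (delta_pow n (a+(b-1))) (delta_pow n (a+b) @ inv_word (delta_word n))"
    using delta_pow_pred[of n "a+b"] by (simp add: algebra_simps)
  also have "braid_eq n \<dots> ((delta_pow n a @ delta_pow n b) @ inv_word (delta_word n))"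
    by (rule braid_eq_append_right[OF step2(2)])
  also have "braid_eq n \<dots> (delta_pow n a @ delta_pow n (b-1))"
    using braid_eq_append_left[OF be_sym[OF delta_pow_pred[of n b]]] by simp
  finally show ?case .
qed

lemma delta_pow_comm: "braid_eq n (delta_pow n a @ delta_pow n b) (delta_pow n b @ delta_pow n a)"
  using delta_pow_add[of n a b] delta_pow_add[of n b a] by (metis add.commute be_sym be_trans)

lemma delta_pow_cancel: "braid_eq n (delta_pow n k @ delta_pow n (-k)) []"
  using delta_pow_add[of n k "-k"] be_sym by simp

lemma delta_pow_cancel': "braid_eq n (delta_pow n (-k) @ delta_pow n k) []"
  using delta_pow_cancel[of n "-k"] by simp

lemma inv_delta_pow: "braid_eq n (inv_word (delta_pow n k)) (delta_pow n (-k))"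
proof -
  have "braid_eq n (delta_pow n k @ delta_pow n (-k)) ([] @ [])" using delta_pow_cancel by simp
  then have "braid_eq n (delta_pow n (-k)) (inv_word (delta_pow n k) @ [])"
    using braid_eq_append_left_iff[of n "delta_pow n k"] by simp
  then show ?thesis using be_sym by simp
qed

lemma exp_sum_delta_pow: "exp_sum (delta_pow n k) = k * exp_sum (delta_word n)"
proof (induction k rule: int_induct[where k=0])
  case base then show ?case by simp
next
  case (step1 i) then show ?case using exp_sum_braid_eq[OF delta_pow_succ[of n i]]
    by (simp add: algebra_simps)
next
  case (step2 i) then show ?case using exp_sum_braid_eq[OF delta_pow_pred[of n i]]
    by (simp add: algebra_simps)
qed

lemma exp_sum_delta_word: "2 \<le> n \<Longrightarrow> 1 \<le> exp_sum (delta_word n)"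
proof -
  assume "2 \<le> n"
  then have "1 \<in> set (delta_letters n)" by (simp add: set_delta_letters)
  then have "delta_letters n \<noteq> []" by auto
  then show ?thesis by (simp add: delta_word_pos_word Suc_le_eq)
qed

lemma positive_delta_pow: "0 \<le> k \<Longrightarrow> positive n (delta_pow n k)"
proof -
  assume "0 \<le> k"
  then obtain l where "k = int l" by (metis nonneg_eq_int)
  then show ?thesis
    using delta_pow_of_nat[of n l] positive_pos_word[of n "delta_letters_pow n l"]
      valid_delta_letters
    by (auto simp: delta_letters_pow_def valid_letters_def)
qed

lemma positive_delta_word: "positive n (delta_word n)"
  using positive_delta_pow[of 1 n] by (simp add: delta_pow_1)

lemma delta_pow_conj:
  "2 \<le> n \<Longrightarrow> valid_letters n X \<Longrightarrow>
    braid_eq n (pos_word X @ delta_pow n (int l)) (delta_pow n (int l) @ pos_word (flip_pow n l X))"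
proof -
  assume n2: "2 \<le> n" and v: "valid_letters n X"
  have vd: "valid_letters n (delta_letters_pow n l)"
    by (induction l) (auto simp: delta_letters_pow_Suc valid_delta_letters)
  have "braid_eq n (pos_word (X @ delta_letters_pow n l))
      (pos_word (delta_letters_pow n l @ flip_pow n l X))"
    using braid_eq_of_pos_eq[OF pos_eq_delta_pow_conj[OF n2 v, of l]] v vd by simp
  then show ?thesis by (simp add: delta_pow_of_nat)
qed

lemma delta_neg_pow_conj:
  "2 \<le> n \<Longrightarrow> valid_letters n P \<Longrightarrow>
    braid_eq n (pos_word P @ delta_pow n (- int l)) (delta_pow n (- int l) @ pos_word (flip_pow n l P))"
proof -
  assume n2: "2 \<le> n" and v: "valid_letters n P"
  have v': "valid_letters n (flip_pow n l P)" using valid_letters_flip_pow[OF v] .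
  have tt: "flip_pow n l (flip_pow n l P) = P" using flip_pow_flip_pow[OF v, of l l]
    by (simp add: flip_pow_def)
  have c: "braid_eq n (pos_word (flip_pow n l P) @ delta_pow n (int l))
      (delta_pow n (int l) @ pos_word P)"
    using delta_pow_conj[OF n2 v', of l] tt by simp
  have "braid_eq n (pos_word P @ delta_pow n (- int l))
      ((delta_pow n (- int l) @ delta_pow n (int l)) @ pos_word P @ delta_pow n (- int l))"
    using braid_eq_append_right[OF be_sym[OF delta_pow_cancel']] by simp
  also have "braid_eq n \<dots>
      (delta_pow n (- int l) @ (pos_word (flip_pow n l P) @ delta_pow n (int l)) @ delta_pow n (- int l))"
    using be_ctxt[OF be_sym[OF c], of "delta_pow n (- int l)" "delta_pow n (- int l)"] by simp
  also have "braid_eq n \<dots> (delta_pow n (- int l) @ pos_word (flip_pow n l P) @ [])"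
    using be_ctxt[OF delta_pow_cancel[of n "int l"],
        of "delta_pow n (- int l) @ pos_word (flip_pow n l P)" "[]"]
    by simp
  finally show ?thesis by simp
qed

lemma tau_pow_pos_word:
  assumes "2 \<le> n" "valid_letters n X"
  shows "braid_eq n (tau_pow n k (pos_word X)) (pos_word (flip_pow n (nat \<bar>k\<bar>) X))"
proof -
  obtain l where "k = int l \<or> k = - int l" by (metis int_cases2)
  then show ?thesis
  proof
    assume k: "k = int l"
    have "braid_eq n (tau_pow n k (pos_word X))
        ((delta_pow n (- int l) @ delta_pow n (int l)) @ pos_word (flip_pow n l X))"
      unfolding tau_pow_def k using braid_eq_append_left[OF delta_pow_conj[OF assms, of l]] by simp
    also have "braid_eq n \<dots> (pos_word (flip_pow n l X))"
      using braid_eq_append_right[OF delta_pow_cancel'] by simp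
    finally show ?thesis using k by simp
  next
    assume k: "k = - int l"
    have "braid_eq n (tau_pow n k (pos_word X))
        ((delta_pow n (int l) @ delta_pow n (- int l)) @ pos_word (flip_pow n l X))"
      unfolding tau_pow_def k using braid_eq_append_left[OF delta_neg_pow_conj[OF assms, of l]]
      by simp
    also have "braid_eq n \<dots> (pos_word (flip_pow n l X))"
      using braid_eq_append_right[OF delta_pow_cancel] by simp
    finally show ?thesis using k by simp
  qed
qed

lemma tau_pow_braid_eq: "braid_eq n x y \<Longrightarrow> braid_eq n (tau_pow n k x) (tau_pow n k y)"
  unfolding tau_pow_def by (rule be_ctxt)

lemma positive_tau_pow:
  assumes "2 \<le> n" "positive n x"
  shows "positive n (tau_pow n k x)"
proof -
  obtain X where X: "valid_letters n X" "braid_eq n x (pos_word X)"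
    using assms(2) positive_iff_pos_word by blast
  have "braid_eq n (tau_pow n k x) (pos_word (flip_pow n (nat \<bar>k\<bar>) X))"
    using tau_pow_braid_eq[OF X(2)] tau_pow_pos_word[OF assms(1) X(1)] be_trans by blast
  then show ?thesis
    using positive_pos_word[OF valid_letters_flip_pow[OF X(1)]] positive_braid_eq be_sym by blast
qed

lemma tau_pow_append: "braid_eq n (tau_pow n k (x @ y)) (tau_pow n k x @ tau_pow n k y)"
proof -
  have "braid_eq n (delta_pow n (-k) @ x @ [] @ y @ delta_pow n k)
      (delta_pow n (-k) @ x @ (delta_pow n k @ delta_pow n (-k)) @ y @ delta_pow n k)"
    using be_ctxt[OF be_sym[OF delta_pow_cancel[of n k]], of "delta_pow n (-k) @ x" "y @ delta_pow n k"]
    by simp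
  then show ?thesis by (simp add: tau_pow_def)
qed

lemma valid_tau_pow[simp]: "valid_word n (tau_pow n k x) = valid_word n x"
  by (simp add: tau_pow_def)

lemma prec_tau_pow: "2 \<le> n \<Longrightarrow> prec n a b \<Longrightarrow> prec n (tau_pow n k a) (tau_pow n k b)"
proof -
  assume n2: "2 \<le> n" and "prec n a b"
  then obtain c where c: "positive n c" "braid_eq n (a @ c) b" by (auto simp: prec_def)
  have "braid_eq n (tau_pow n k a @ tau_pow n k c) (tau_pow n k b)"
    using tau_pow_append[of n k a c] tau_pow_braid_eq[OF c(2)] be_sym be_trans by blast
  then show ?thesis unfolding prec_def using positive_tau_pow[OF n2 c(1)] by blast
qed

lemma tau_pow_delta_word: "braid_eq n (tau_pow n k (delta_word n)) (delta_word n)"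
proof -
  have "braid_eq n (delta_pow n (-k) @ delta_pow n 1 @ delta_pow n k)
      (delta_pow n (-k) @ delta_pow n k @ delta_pow n 1)"
    using braid_eq_append_left[OF delta_pow_comm[of n 1 k]] .
  also have "braid_eq n \<dots> ([] @ delta_pow n 1)"
    using braid_eq_append_right[OF delta_pow_cancel'[of n k]] by simp
  finally show ?thesis by (simp add: tau_pow_def delta_pow_1)
qed

lemma inv_tau_pow:
  "braid_eq n (inv_word (tau_pow n k x)) (delta_pow n (-k) @ inv_word x @ delta_pow n k)"
proof -
  have "inv_word (tau_pow n k x) =
      inv_word (delta_pow n k) @ inv_word x @ inv_word (delta_pow n (-k))"
    by (simp add: tau_pow_def)
  also have "braid_eq n \<dots> (delta_pow n (-k) @ inv_word x @ delta_pow n k)"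
    using braid_eq_append[OF inv_delta_pow[of n k]
        braid_eq_append_left[OF inv_delta_pow[of n "-k"], of "inv_word x"]]
    by simp
  finally show ?thesis .
qed

section \<open>The infimum\<close>

definition inf_ge :: "nat \<Rightarrow> bword \<Rightarrow> int \<Rightarrow> bool" where
  "inf_ge n d k = (\<exists>p. positive n p \<and> braid_eq n d (delta_pow n k @ p))"

lemma binf_Greatest_inf_ge: "binf n d = (GREATEST k. inf_ge n d k)"
  by (simp add: binf_def inf_ge_def)

lemma Greatest_int_bounded:
  fixes P :: "int \<Rightarrow> bool"
  assumes "P k0" and "\<And>k. P k \<Longrightarrow> k \<le> B"
  shows "P (GREATEST k. P k) \<and> (\<forall>k. P k \<longrightarrow> k \<le> (GREATEST k. P k))"
proof -
  define S where "S = {k. k0 \<le> k \<and> k \<le> B \<and> P k}"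
  have fin: "finite S" by (rule finite_subset[of _ "{k0..B}"]) (auto simp: S_def)
  have ne: "k0 \<in> S" using assms by (auto simp: S_def)
  define M where "M = Max S"
  have PM: "P M" using Max_in[OF fin] ne by (auto simp: M_def S_def)
  have le: "P k \<Longrightarrow> k \<le> M" for k
  proof (cases "k0 \<le> k")
    case True
    assume "P k"
    then have "k \<in> S" using True assms by (auto simp: S_def)
    then show ?thesis using Max_ge[OF fin] by (simp add: M_def)
  next
    case False
    then show ?thesis using Max_ge[OF fin ne] by (simp add: M_def)
  qed
  have "(GREATEST k. P k) = M" using PM le by (intro Greatest_equality) auto
  then show ?thesis using PM le by auto
qed

lemma inf_ge_bound:
  assumes n: "2 \<le> n" and "inf_ge n d k"
  shows "k \<le> \<bar>exp_sum d\<bar>"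
proof (cases "0 \<le> k")
  case True
  obtain p where p: "positive n p" "braid_eq n d (delta_pow n k @ p)"
    using assms(2) by (auto simp: inf_ge_def)
  have d: "exp_sum d = k * exp_sum (delta_word n) + exp_sum p"
    using exp_sum_braid_eq[OF p(2)] exp_sum_delta_pow by simp
  have "k \<le> k * exp_sum (delta_word n)"
    using True mult_left_mono[OF exp_sum_delta_word[OF n] True] by simp
  then show ?thesis using d exp_sum_nonneg[OF p(1)] by linarith
qed simp

lemma braid_eq_delta_neg_pow_pos_word:
  "2 \<le> n \<Longrightarrow> valid_word n d \<Longrightarrow>
    \<exists>l Q. valid_letters n Q \<and> braid_eq n d (delta_pow n (- int l) @ pos_word Q)"
proof (induction d)
  case Nil then show ?case by (intro exI[of _ 0] exI[of _ "[]"]) (simp add: be_refl)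
next
  case (Cons a w)
  obtain j b where a: "a = (j,b)" by (cases a)
  have vj: "1 \<le> j" "j < n" using Cons.prems a by auto
  obtain l Q where Q: "valid_letters n Q" "braid_eq n w (delta_pow n (- int l) @ pos_word Q)"
    using Cons by auto
  show ?case
  proof (cases b)
    case True
    have "braid_eq n (a # w) (pos_word [j] @ delta_pow n (- int l) @ pos_word Q)"
      using braid_eq_append_left[OF Q(2), of "[a]"] a True by (simp add: pos_word_def)
    also have "braid_eq n \<dots> (delta_pow n (- int l) @ pos_word (flip_pow n l [j]) @ pos_word Q)"
      using braid_eq_append_right[OF delta_neg_pow_conj[OF Cons.prems(1), of "[j]" l]] vj by simp
    finally show ?thesis using Q(1) valid_letters_flip_pow[of n "[j]" l] vj
      by (metis pos_word_append valid_letters_append valid_letters_Cons valid_letters_Nil)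
  next
    case False
    have vc: "valid_letters n (delta_rquot n j)" using set_delta_rquot[of n j] vj Cons.prems
      by (auto simp: valid_letters_def)
    have eD: "braid_eq n (delta_word n) (pos_word (delta_rquot n j) @ pos_word [j])"
      using braid_eq_of_pos_eq[OF delta_letters_rquot[OF Cons.prems(1) vj] valid_delta_letters]
      by (simp add: delta_word_pos_word)
    have ea: "braid_eq n [a] (inv_word (delta_word n) @ pos_word (delta_rquot n j))"
    proof -
      have "braid_eq n (delta_word n @ [a])
          ((pos_word (delta_rquot n j) @ pos_word [j]) @ [(j, False)])"
        using braid_eq_append_right[OF eD] a False by simp
      also have "braid_eq n \<dots> (pos_word (delta_rquot n j) @ [])"
        using braid_eq_append_left[OF be_cancel[OF vj, of True]] by (simp add: pos_word_def)
      finally show ?thesis using braid_eq_append_left_iff[of n "delta_word n" "[a]"] by simp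
    qed
    have "braid_eq n (a # w)
        ((inv_word (delta_word n) @ pos_word (delta_rquot n j)) @ delta_pow n (- int l) @ pos_word Q)"
      using braid_eq_append[OF ea Q(2)] by simp
    also have "braid_eq n \<dots> (inv_word (delta_word n) @
        (delta_pow n (- int l) @ pos_word (flip_pow n l (delta_rquot n j))) @ pos_word Q)"
      using be_ctxt[OF delta_neg_pow_conj[OF Cons.prems(1) vc], of "inv_word (delta_word n)"]
      by simp
    also have "\<dots> =
        (delta_pow n (-1) @ delta_pow n (- int l)) @ pos_word (flip_pow n l (delta_rquot n j) @ Q)"
      by (simp add: delta_pow_minus_1)
    also have "braid_eq n \<dots>
        (delta_pow n (- int (Suc l)) @ pos_word (flip_pow n l (delta_rquot n j) @ Q))"
      using braid_eq_append_right[OF be_sym[OF delta_pow_add[of n "-1" "- int l"]]] by simp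
    finally show ?thesis using Q(1) valid_letters_flip_pow[OF vc, of l]
      by (metis valid_letters_append)
  qed
qed

lemma inf_ge_mono: "inf_ge n d k \<Longrightarrow> J \<le> k \<Longrightarrow> inf_ge n d J"
proof -
  assume "inf_ge n d k" "J \<le> k"
  then obtain p where p: "positive n p" "braid_eq n d (delta_pow n k @ p)"
    by (auto simp: inf_ge_def)
  have "braid_eq n (delta_pow n k @ p) ((delta_pow n J @ delta_pow n (k - J)) @ p)"
    using braid_eq_append_right[OF delta_pow_add[of n J "k-J"]] by simp
  then have "braid_eq n d (delta_pow n J @ (delta_pow n (k - J) @ p))" using p(2) be_trans by simp
  moreover have "positive n (delta_pow n (k - J) @ p)"
    using positive_delta_pow[of "k-J" n] \<open>J \<le> k\<close> p(1) positive_append by simp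
  ultimately show ?thesis by (auto simp: inf_ge_def)
qed

lemma le_binf_iff: "2 \<le> n \<Longrightarrow> valid_word n d \<Longrightarrow> (J \<le> binf n d \<longleftrightarrow> inf_ge n d J)"
proof -
  assume n2: "2 \<le> n" and v: "valid_word n d"
  obtain l Q where Q: "valid_letters n Q" "braid_eq n d (delta_pow n (- int l) @ pos_word Q)"
    using braid_eq_delta_neg_pow_pos_word[OF n2 v] by blast
  have "inf_ge n d (- int l)" using Q positive_pos_word by (auto simp: inf_ge_def)
  then have G: "inf_ge n d (binf n d) \<and> (\<forall>k. inf_ge n d k \<longrightarrow> k \<le> binf n d)"
    unfolding binf_Greatest_inf_ge
    using Greatest_int_bounded[of "inf_ge n d" _ "\<bar>exp_sum d\<bar>"] inf_ge_bound[OF n2] by blast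
  show ?thesis using G inf_ge_mono by blast
qed

lemma inf_ge_iff_positive: "inf_ge n w j \<longleftrightarrow> positive n (delta_pow n (- j) @ w)"
proof
  assume "inf_ge n w j"
  then obtain q where q: "positive n q" "braid_eq n w (delta_pow n j @ q)"
    by (auto simp: inf_ge_def)
  have "braid_eq n (delta_pow n (- j) @ w) (delta_pow n (- j) @ delta_pow n j @ q)"
    using braid_eq_append_left[OF q(2)] .
  also have "braid_eq n \<dots> q" using braid_eq_append_right[OF delta_pow_cancel', of n j q] by simp
  finally show "positive n (delta_pow n (- j) @ w)" using q(1) positive_braid_eq be_sym by blast
next
  assume "positive n (delta_pow n (- j) @ w)"
  moreover have "braid_eq n w (delta_pow n j @ delta_pow n (- j) @ w)"
    using braid_eq_append_right[OF delta_pow_cancel, of n j w] be_sym by simp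
  ultimately show "inf_ge n w j" by (auto simp: inf_ge_def)
qed

lemma inf_ge_conj_iff:
  assumes s: "valid_word n s" and d: "braid_eq n d (delta_pow n j @ q)"
  shows "inf_ge n (inv_word s @ d @ s) j \<longleftrightarrow> prec n (tau_pow n j s) (q @ s)"
proof -
  have "braid_eq n (delta_pow n (- j) @ inv_word s @ d @ s)
      ((delta_pow n (- j) @ inv_word s @ delta_pow n j) @ q @ s)"
    using be_ctxt[OF d, of "delta_pow n (- j) @ inv_word s" s] by simp
  also have "braid_eq n \<dots> (inv_word (tau_pow n j s) @ q @ s)"
    using braid_eq_append_right[OF be_sym[OF inv_tau_pow]] .
  finally show ?thesis
    using positive_braid_eq be_sym prec_iff_positive[of n "tau_pow n j s"] s
    by (metis inf_ge_iff_positive valid_tau_pow)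
qed

lemma inf_ge_conj_delta:
  assumes "2 \<le> n" and "inf_ge n d j"
  shows "inf_ge n (inv_word (delta_word n) @ d @ delta_word n) j"
proof -
  obtain q where q: "positive n q" "braid_eq n d (delta_pow n j @ q)"
    using assms(2) by (auto simp: inf_ge_def)
  have "braid_eq n (delta_word n @ tau_pow n 1 q)
      ((delta_word n @ delta_pow n (- 1)) @ q @ delta_word n)"
    by (simp add: tau_pow_def delta_pow_1 be_refl)
  also have "braid_eq n \<dots> (q @ delta_word n)"
    using braid_eq_append_right[OF delta_pow_cancel[of n 1]] by (simp add: delta_pow_1)
  finally have "prec n (delta_word n) (q @ delta_word n)"
    using prec_cong_right prec_append positive_tau_pow[OF assms(1) q(1)] by blast
  then have "prec n (tau_pow n j (delta_word n)) (q @ delta_word n)"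
    using prec_cong_left[OF be_sym[OF tau_pow_delta_word]] by blast
  then show ?thesis using inf_ge_conj_iff[OF valid_delta_word q(2)] by blast
qed

lemma inf_ge_conj_simple:
  assumes n: "2 \<le> n" and s: "positive n s" "prec n s (delta_word n)" and d: "inf_ge n d (j + 1)"
  shows "inf_ge n (inv_word s @ d @ s) j"
proof -
  obtain q where q: "positive n q" "braid_eq n d (delta_pow n (j + 1) @ q)"
    using d by (auto simp: inf_ge_def)
  have "braid_eq n d (delta_pow n j @ delta_word n @ q)"
    using q(2) braid_eq_append_right[OF delta_pow_add[of n j 1], of q] be_trans
    by (simp add: delta_pow_1)
  moreover have "prec n (tau_pow n j s) (delta_word n @ q @ s)"
    using prec_cong_right[OF tau_pow_delta_word prec_tau_pow[OF n s(2)]]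
      prec_append[OF positive_append[OF q(1) s(1)]] prec_trans by blast
  ultimately show ?thesis
    using inf_ge_conj_iff[of n s] positive_valid[OF s(1)] by simp
qed

lemma is_r_if_least:
  assumes "s \<in> r_set n J \<delta> i" and "\<forall>x\<in>r_set n J \<delta> i. prec n s x"
  shows "is_r n J \<delta> i s"
proof -
  have "minimal_in n (r_set n J \<delta> i) s"
    using assms prec_antisym by (auto simp: minimal_in_def r_set_def)
  moreover have "braid_eq n s' s" if "minimal_in n (r_set n J \<delta> i) s'" for s'
    using that assms be_sym by (auto simp: minimal_in_def)
  ultimately show ?thesis by (simp add: is_r_def)
qed

lemma int_increasing_unbounded:
  fixes g :: "nat \<Rightarrow> int"
  assumes "\<And>k. g k < g (Suc k)"
  shows "g 0 + int k \<le> g k"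
proof (induction k)
  case (Suc k)
  then show ?case using assms[of k] by simp
qed simp

section \<open>The algorithm\<close>

locale alg_setting =
  fixes n i :: nat and J :: "int list" and \<delta> :: "bword list" and p :: "nat \<Rightarrow> bword"
  assumes i: "1 \<le> i" "i < n"
    and C: "in_C n J \<delta>"
    and p: "\<forall>t\<in>alg_D n J \<delta>. valid_word n (p t) \<and> positive n (p t) \<and>
                          braid_eq n (\<delta> ! t) (delta_pow n (J ! t) @ p t)"
begin

abbreviation cands where "cands \<equiv> r_set n J \<delta> i"
abbreviation step where "step \<equiv> alg_step n J \<delta> p"
abbreviation sigma_i where "sigma_i \<equiv> [(i, True)]"

lemma n: "2 \<le> n" using i by simp

lemma in_C_conj_iff:
  assumes "valid_word n s"
  shows "in_C n J (conj_tuple \<delta> s) \<longleftrightarrow> (\<forall>t<length J. inf_ge n (inv_word s @ (\<delta> ! t) @ s) (J ! t))"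
  using C assms n by (auto simp: in_C_def conj_tuple_def le_binf_iff)

lemma cand_tau_prec:
  assumes x: "x \<in> cands" and m: "m \<in> alg_D n J \<delta>"
  shows "prec n (tau_pow n (J ! m) x) (p m @ x)"
proof -
  have vx: "valid_word n x" using x by (simp add: r_set_def)
  then have "inf_ge n (inv_word x @ (\<delta> ! m) @ x) (J ! m)"
    using x m in_C_conj_iff by (simp add: r_set_def alg_D_def)
  then show ?thesis using inf_ge_conj_iff[OF vx] p m by blast
qed

lemma delta_cand: "delta_word n \<in> cands"
proof -
  obtain c where "pos_eq (delta_letters n) (i # c)"
    using delta_letters_left_divisible[OF n i] by blast
  moreover from this have "valid_letters n c"
    using pos_eq_set valid_delta_letters by (fastforce simp: valid_letters_def)
  ultimately have "braid_eq n (sigma_i @ pos_word c) (delta_word n)"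
    using braid_eq_of_pos_eq valid_delta_letters be_sym
    by (fastforce simp: delta_word_pos_word pos_word_def)
  then have "prec n sigma_i (delta_word n)"
    using positive_pos_word \<open>valid_letters n c\<close> by (auto simp: prec_def)
  moreover have "inf_ge n (\<delta> ! t) (J ! t)" if "t < length J" for t
    using C that le_binf_iff[OF n, of "\<delta> ! t" "J ! t"] by (auto simp: in_C_def)
  then have "in_C n J (conj_tuple \<delta> (delta_word n))"
    using in_C_conj_iff inf_ge_conj_delta[OF n] by simp
  ultimately show ?thesis using positive_delta_word prec_refl by (simp add: r_set_def simple_def)
qed

definition alg_inv :: "bword \<Rightarrow> bool" where
  "alg_inv s \<longleftrightarrow> valid_word n s \<and> positive n s \<and> prec n sigma_i s \<and> (\<forall>x\<in>cands. prec n s x)"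

lemma alg_inv_start: "alg_inv sigma_i"
  using i prec_refl positive_pos_word[of n "[i]"] by (auto simp: alg_inv_def r_set_def pos_word_def)

lemma alg_inv_step:
  assumes s: "alg_inv s" and st: "step s s2"
  shows "alg_inv s2"
proof -
  obtain m s' where m: "m \<in> alg_D n J \<delta>" and s': "valid_word n s'" "positive n s'"
    and lcm: "is_lcm n (tau_pow n (J ! m) s) (p m @ s) (p m @ s @ s')" and s2: "s2 = s @ s'"
    using st by (auto simp: alg_step_def)
  have pm: "valid_word n (p m)" "positive n (p m)" using p m by auto
  have "prec n s2 x" if x: "x \<in> cands" for x
  proof -
    have sx: "prec n s x" using s x by (simp add: alg_inv_def)
    have "prec n (tau_pow n (J ! m) s) (p m @ x)"
      using prec_trans[OF prec_tau_pow[OF n sx] cand_tau_prec[OF x m]] .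
    moreover have "positive n (p m @ x)" using positive_append pm x
      by (simp add: r_set_def simple_def)
    ultimately have "prec n (p m @ s @ s') (p m @ x)"
      using lcm prec_append_left[OF sx] by (simp add: is_lcm_def)
    then show ?thesis using prec_append_left_iff[OF pm(1)] s2 by simp
  qed
  then show ?thesis
    using s s' s2 positive_append prec_trans prec_append by (auto simp: alg_inv_def)
qed

lemma alg_inv_reachable: "step\<^sup>*\<^sup>* sigma_i s \<Longrightarrow> alg_inv s"
  by (induction rule: rtranclp_induct) (auto intro: alg_inv_start alg_inv_step)

lemma exp_sum_step:
  assumes st: "step s s2"
  shows "exp_sum s < exp_sum s2"
proof -
  obtain m s' where np: "\<not> prec n (tau_pow n (J ! m) s) (p m @ s)" and s': "positive n s'"
    and lcm: "is_lcm n (tau_pow n (J ! m) s) (p m @ s) (p m @ s @ s')" and s2: "s2 = s @ s'"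
    using st by (auto simp: alg_step_def)
  have "exp_sum s' \<noteq> 0"
  proof
    assume "exp_sum s' = 0"
    then have "braid_eq n (p m @ s @ s') (p m @ s)"
      using positive_exp_sum_0[OF s'] braid_eq_append_left[of n s' "[]" "p m @ s"] by simp
    then show False using lcm np prec_cong_right by (auto simp: is_lcm_def)
  qed
  then show ?thesis using exp_sum_nonneg[OF s'] s2 by simp
qed

lemma alg_inv_exp_sum_le: "alg_inv s \<Longrightarrow> exp_sum s \<le> exp_sum (delta_word n)"
  using delta_cand prec_exp_sum by (auto simp: alg_inv_def)

lemma no_infinite_run: "\<nexists>f. f 0 = sigma_i \<and> (\<forall>k. step (f k) (f (Suc k)))"
proof
  assume "\<exists>f. f 0 = sigma_i \<and> (\<forall>k. step (f k) (f (Suc k)))"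
  then obtain f where f0: "f 0 = sigma_i" and fs: "\<And>k. step (f k) (f (Suc k))" by blast
  have "step\<^sup>*\<^sup>* sigma_i (f k)" for k
  proof (induction k)
    case (Suc k)
    then show ?case using fs rtranclp.rtrancl_into_rtrancl by metis
  qed (simp add: f0)
  then have bound: "exp_sum (f k) \<le> exp_sum (delta_word n)" for k
    using alg_inv_exp_sum_le alg_inv_reachable by blast
  have grow: "exp_sum (f 0) + int k \<le> exp_sum (f k)" for k
    using int_increasing_unbounded[of "\<lambda>k. exp_sum (f k)"] exp_sum_step[OF fs] by blast
  define k where "k = nat (exp_sum (delta_word n) - exp_sum (f 0)) + 1"
  have "exp_sum (delta_word n) - exp_sum (f 0) < int k" by (simp add: k_def)
  then show False using grow[of k] bound[of k] by linarith
qed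

lemma step_exists:
  assumes "alg_inv s" and "\<not> alg_stop n J \<delta> p s"
  shows "\<exists>s2. step s s2"
proof -
  have s: "positive n s" "prec n s (delta_word n)"
    using assms(1) delta_cand by (auto simp: alg_inv_def)
  obtain m where m: "m \<in> alg_D n J \<delta>" and np: "\<not> prec n (tau_pow n (J ! m) s) (p m @ s)"
    using assms(2) by (auto simp: alg_stop_def)
  have pm: "valid_word n (p m)" "positive n (p m)" using p m by auto
  have "prec n (tau_pow n (J ! m) s) (p m @ delta_word n)"
    using prec_trans[OF prec_tau_pow[OF n s(2)] cand_tau_prec[OF delta_cand m]] .
  moreover have "prec n (p m @ s) (p m @ delta_word n)" using prec_append_left[OF s(2)] .
  ultimately obtain s' where "valid_word n s'" "positive n s'"
    "is_lcm n (tau_pow n (J ! m) s) (p m @ s) (p m @ s @ s')"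
    using is_lcm_exists[OF n positive_tau_pow[OF n s(1)] positive_append[OF pm(2) s(1)]] pm
    by (metis append.assoc valid_delta_word valid_word_append)
  then show ?thesis unfolding alg_step_def using m np by blast
qed

lemma stop_is_r:
  assumes s: "alg_inv s" and st: "alg_stop n J \<delta> p s"
  shows "is_r n J \<delta> i s"
proof -
  have vs: "valid_word n s" "positive n s" and sD: "prec n s (delta_word n)"
    using s delta_cand by (auto simp: alg_inv_def)
  have "inf_ge n (inv_word s @ (\<delta> ! t) @ s) (J ! t)" if t: "t < length J" for t
  proof (cases "t \<in> alg_D n J \<delta>")
    case True
    then show ?thesis using inf_ge_conj_iff[OF vs(1)] st p by (auto simp: alg_stop_def)
  next
    case False
    then have "J ! t + 1 \<le> binf n (\<delta> ! t)" using C t by (auto simp: in_C_def alg_D_def)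
    then have "inf_ge n (\<delta> ! t) (J ! t + 1)" using C t le_binf_iff[OF n] by (simp add: in_C_def)
    then show ?thesis using inf_ge_conj_simple[OF n vs(2) sD] by blast
  qed
  then have "s \<in> cands"
    using s vs sD in_C_conj_iff by (simp add: alg_inv_def r_set_def simple_def)
  then show ?thesis using is_r_if_least s by (simp add: alg_inv_def)
qed

end

theorem proposition4p1:
  fixes n i :: nat and J :: "int list" and \<delta> :: "bword list" and p :: "nat \<Rightarrow> bword"
  assumes "1 \<le> i" and "i < n"
    and "in_C n J \<delta>"
    and "\<forall>t\<in>alg_D n J \<delta>. valid_word n (p t) \<and> positive n (p t) \<and>
                          braid_eq n (\<delta> ! t) (delta_pow n (J ! t) @ p t)"
  shows "(\<nexists>f. f 0 = [(i, True)] \<and> (\<forall>k. alg_step n J \<delta> p (f k) (f (Suc k))))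
       \<and> (\<forall>s. (alg_step n J \<delta> p)\<^sup>*\<^sup>* [(i, True)] s \<longrightarrow>
              alg_stop n J \<delta> p s \<or> (\<exists>s2. alg_step n J \<delta> p s s2))
       \<and> (\<forall>s. (alg_step n J \<delta> p)\<^sup>*\<^sup>* [(i, True)] s \<and> alg_stop n J \<delta> p s \<longrightarrow>
              is_r n J \<delta> i s)"
proof -
  interpret alg_setting n i J \<delta> p using assms by unfold_locales auto
  show ?thesis using no_infinite_run step_exists stop_is_r alg_inv_reachable by blast
qed

end
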